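(* There is a sufficiently small absolute constant $c>0$ such that the following holds. Let $\bm{\mathcal{X}}\in\mathbb{R}^{n\times r\times k}$ with $\kappa=\kappa(\bm{\mathcal{X}})$, $\bm{\mathcal{U}}_t\in\mathbb{R}^{n\times R\times k}$ and $\bm{\mathcal{U}}_{t+1}=[\bm{\mathcal{I}}+\mu(\mathcal{A}^*\mathcal{A})(\bm{\mathcal{X}}*\bm{\mathcal{X}}^\top-\bm{\mathcal{U}}_t*\bm{\mathcal{U}}_t^\top)]*\bm{\mathcal{U}}_t$. Assume $\mu\le c\|\bm{\mathcal{X}}\|^{-2}\kappa^{-2}$, $\|\bm{\mathcal{U}}_t\|\le 3\|\bm{\mathcal{X}}\|$, $\|\bm{\mathcal{V}}_{\bm{\mathcal{X}}^\perp}^\top*\bm{\mathcal{V}}_{\bm{\mathcal{U}}_t*\bm{\mathcal{W}}_t}\|\le c\kappa^{-1}$, $\|(\mathcal{A}^*\mathcal{A}-\mathcal{I})(\bm{\mathcal{X}}*\bm{\mathcal{X}}^\top-\bm{\mathcal{U}}_t*\bm{\mathcal{U}}_t^\top)\|\le c\,\sigma_{\min}^2(\overline{\bm{\mathcal{X}}})$, and that $\bm{\mathcal{V}}_{\bm{\mathcal{X}}}^\top*\bm{\mathcal{U}}_t$ has full tubal rank with all t-SVD singular tubes invertible. Then for each $1\le j\le k$, $$\sigma_{\min}\big(\overline{\bm{\mathcal{V}}_{\bm{\mathcal{X}}}^\top*\bm{\mathcal{U}}_{t+1}}^{(j)}\big)\ge\sigma_{\min}\big(\overline{\bm{\mathc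al{V}}_{\bm{\mathcal{X}}}^\top*\bm{\mathcal{U}}_{t+1}*\bm{\mathcal{W}}_t}^{(j)}\big)\ge\sigma_{\min}\big(\overline{\bm{\mathcal{V}}_{\bm{\mathcal{X}}}^\top*\bm{\mathcal{U}}_t}^{(j)}\big)\Big(1+\tfrac14\mu\sigma_{\min}^2(\overline{\bm{\mathcal{X}}})-\mu\sigma_{\min}^2\big(\overline{\bm{\mathcal{V}}_{\bm{\mathcal{X}}}^\top*\bm{\mathcal{U}}_t}^{(j)}\big)\Big).$$
   Context: All tensors are real third-order with third mode of length $k$. Fourier slices $\overline{\bm{\mathcal{T}}}^{(j)}(i,i')=\sum_{j'}\bm{\mathcal{T}}(i,i',j')e^{-\sqrt{-1}\,2\pi(j-1)(j'-1)/k}$, $\overline{\bm{\mathcal{T}}}=\mathrm{blockdiag}(\overline{\bm{\mathcal{T}}}^{(j)})_j$. t-product $*$ is tube-wise circular convolution, $\overline{\bm{\mathcal{A}}*\bm{\mathcal{B}}}=\overline{\bm{\mathcal{A}}}\,\overline{\bm{\mathcal{B}}}$; transpose transposes frontal slices and reverses slices $2,\dots,k$; $\bm{\mathcal{I}}$ identity tensor; $\|\bm{\mathcal{T}}\|=\|\overline{\bm{\mathcal{T}}}\|$. t-SVD $\bm{\mathcal{T}}=\bm{\mathcal{U}}*\bm{\Sigma}*\bm{\mathcal{V}}^\top$; tubal rank = number of nonzero diagonal tubes of $\bm{\Sigma}$; a tube is invertible if its discrete Fourier transform has no zero entries. For a tensor $\bm{\mathcal{Y}}$, $\bm{\mathcal{V}}_{\bm{\mathcal{Y}}}$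 denotes its tensor-column subspace (the left t-SVD factor restricted to the nonzero tubes). $\bm{\mathcal{V}}_{\bm{\mathcal{X}}}\in\mathbb{R}^{n\times r\times k}$ with $\bm{\mathcal{V}}_{\bm{\mathcal{X}}}^\top*\bm{\mathcal{V}}_{\bm{\mathcal{X}}}=\bm{\mathcal{I}}$, and $\bm{\mathcal{V}}_{\bm{\mathcal{X}}^\perp}*\bm{\mathcal{V}}_{\bm{\mathcal{X}}^\perp}^\top=\bm{\mathcal{I}}-\bm{\mathcal{V}}_{\bm{\mathcal{X}}}*\bm{\mathcal{V}}_{\bm{\mathcal{X}}}^\top$. $\bm{\mathcal{W}}_t\in\mathbb{R}^{R\times r\times k}$ is the right factor in a t-SVD $\bm{\mathcal{V}}_{\bm{\mathcal{X}}}^\top*\bm{\mathcal{U}}_t=\bm{\mathcal{V}}_t*\bm{\Sigma}_t*\bm{\mathcal{W}}_t^\top$. $\sigma_{\min}(\overline{\bm{\mathcal{X}}})=\sigma_{rk}(\overline{\bm{\mathcal{X}}})$; $\kappa(\bm{\mathcal{X}})=\sigma_1(\overline{\bm{\mathcal{X}}})/\sigma_{rk}(\overline{\bm{\mathcal{X}}})$. $\mathcal{A}^*\mathcal{A}(\bm{\mathcal{Z}})=\sum_i\langle\bm{\mathcal{A}}_i,\bm{\mathcal{Z}}\rangle\bm{\mathcal{A}}_i$ for fixed tubal-symmetric $\bm{\mathcal{A}}_i\in\mathbb{R}^{n\times n\times k}$, and $\mathcal{I}$ is the identity operator. *)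

theory Defs
  imports "HOL-Analysis.Analysis"
begin

text \<open>Real third-order tensors are encoded as functions nat => nat => nat => real,
  always used together with explicit dimensions p x q x k (0-indexed; entries outside
  the index box are irrelevant junk).  Complex matrices are nat => nat => complex,
  complex vectors nat => complex, again with explicit sizes.\<close>

type_synonym tensor = "nat \<Rightarrow> nat \<Rightarrow> nat \<Rightarrow> real"
type_synonym cmat = "nat \<Rightarrow> nat \<Rightarrow> complex"
type_synonym cvec = "nat \<Rightarrow> complex"

definition teq :: "nat \<Rightarrow> nat \<Rightarrow> nat \<Rightarrow> tensor \<Rightarrow> tensor \<Rightarrow> bool" where
  "teq p q k A B \<longleftrightarrow> (\<forall>i<p. \<forall>l<q. \<forall>t<k. A i l t = B i l t)"

text \<open>t-product of A (p x m x k) and B (m x q x k): tube-wise circular convolution.\<close>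
definition tprod :: "nat \<Rightarrow> nat \<Rightarrow> tensor \<Rightarrow> tensor \<Rightarrow> tensor" where
  "tprod k m A B = (\<lambda>i l t. \<Sum>s<m. \<Sum>t'<k. A i s t' * B s l ((t + k - t') mod k))"

text \<open>Transpose: transpose frontal slices, reverse slices 2..k.\<close>
definition ttr :: "nat \<Rightarrow> tensor \<Rightarrow> tensor" where
  "ttr k T = (\<lambda>i l t. T l i ((k - t) mod k))"

definition tid :: tensor where
  "tid = (\<lambda>i l t. if i = l \<and> t = 0 then 1 else 0)"

definition tadd :: "tensor \<Rightarrow> tensor \<Rightarrow> tensor" where
  "tadd A B = (\<lambda>i l t. A i l t + B i l t)"

definition tsub :: "tensor \<Rightarrow> tensor \<Rightarrow> tensor" where
  "tsub A B = (\<lambda>i l t. A i l t - B i l t)"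

definition tscale :: "real \<Rightarrow> tensor \<Rightarrow> tensor" where
  "tscale a A = (\<lambda>i l t. a * A i l t)"

definition tinner :: "nat \<Rightarrow> nat \<Rightarrow> nat \<Rightarrow> tensor \<Rightarrow> tensor \<Rightarrow> real" where
  "tinner p q k A B = (\<Sum>i<p. \<Sum>l<q. \<Sum>t<k. A i l t * B i l t)"

text \<open>The measurement operator A^*A(Z) = sum_i <A_i, Z> A_i for the m tensors As 0, ..., As (m-1),
  each n x n x k.\<close>
definition AstarA :: "nat \<Rightarrow> nat \<Rightarrow> nat \<Rightarrow> (nat \<Rightarrow> tensor) \<Rightarrow> tensor \<Rightarrow> tensor" where
  "AstarA n k m As Z = (\<lambda>i l t. \<Sum>s<m. tinner n n k (As s) Z * As s i l t)"

text \<open>j-th Fourier slice (j = 0..k-1, corresponding to the paper's j = 1..k).\<close>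
definition fslice :: "nat \<Rightarrow> tensor \<Rightarrow> nat \<Rightarrow> cmat" where
  "fslice k T j = (\<lambda>a b. \<Sum>j'<k. complex_of_real (T a b j') *
        cis (- 2 * pi * real j * real j' / real k))"

definition bdiag :: "nat \<Rightarrow> nat \<Rightarrow> nat \<Rightarrow> (nat \<Rightarrow> cmat) \<Rightarrow> cmat" where
  "bdiag k p q M = (\<lambda>a b. if a div p = b div q \<and> a div p < k
                          then M (a div p) (a mod p) (b mod q) else 0)"

definition tbar :: "nat \<Rightarrow> nat \<Rightarrow> nat \<Rightarrow> tensor \<Rightarrow> cmat" where
  "tbar k p q T = bdiag k p q (fslice k T)"

text \<open>A tube (nat => real, length k) is invertible iff its DFT has no zero entry.\<close>
definition tube_inv :: "nat \<Rightarrow> (nat \<Rightarrow> real) \<Rightarrow> bool" where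
  "tube_inv k f \<longleftrightarrow> (\<forall>j<k. (\<Sum>j'<k. complex_of_real (f j') *
        cis (- 2 * pi * real j * real j' / real k)) \<noteq> 0)"

definition cvnorm :: "nat \<Rightarrow> cvec \<Rightarrow> real" where
  "cvnorm p x = sqrt (\<Sum>a<p. (cmod (x a))\<^sup>2)"

definition mv :: "nat \<Rightarrow> cmat \<Rightarrow> cvec \<Rightarrow> cvec" where
  "mv q A x = (\<lambda>a. \<Sum>b<q. A a b * x b)"

definition specnorm :: "cmat \<Rightarrow> nat \<Rightarrow> nat \<Rightarrow> real" where
  "specnorm A p q = Sup {cvnorm p (mv q A x) | x. cvnorm q x = 1}"

definition isometry :: "nat \<Rightarrow> nat \<Rightarrow> cmat \<Rightarrow> bool" where
  "isometry q i V \<longleftrightarrow> (\<forall>a<i. \<forall>b<i. (\<Sum>c<q. cnj (V c a) * V c b) = (if a = b then 1 else 0))"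

text \<open>i-th largest singular value (1 <= i <= q) of a p x q complex matrix,
  via the Courant-Fischer max-min principle:
  sigma_i(A) = max over i-dimensional subspaces S of C^q of min over unit x in S of |Ax|.\<close>
definition sigma :: "nat \<Rightarrow> cmat \<Rightarrow> nat \<Rightarrow> nat \<Rightarrow> real" where
  "sigma i A p q = Sup {Inf {cvnorm p (mv q A (mv i V y)) | y. cvnorm i y = 1} | V. isometry q i V}"

definition sigma_min :: "cmat \<Rightarrow> nat \<Rightarrow> nat \<Rightarrow> real" where
  "sigma_min A p q = sigma (min p q) A p q"

definition tnorm :: "nat \<Rightarrow> nat \<Rightarrow> nat \<Rightarrow> tensor \<Rightarrow> real" where
  "tnorm k p q T = specnorm (tbar k p q T) (k * p) (k * q)"

text \<open>sigma_min of the block-diagonal of X (n x r x k) = sigma_{rk}.\<close>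
definition tsigma_min :: "nat \<Rightarrow> nat \<Rightarrow> nat \<Rightarrow> tensor \<Rightarrow> real" where
  "tsigma_min k n r X = sigma (r * k) (tbar k n r X) (k * n) (k * r)"

definition kappa :: "nat \<Rightarrow> nat \<Rightarrow> nat \<Rightarrow> tensor \<Rightarrow> real" where
  "kappa k n r X = tnorm k n r X / tsigma_min k n r X"

text \<open>Compact t-SVD  T = U * S * V^T  of a p x q x k tensor with s singular tubes:
  U (p x s) and V (q x s) have orthonormal tensor columns, S (s x s) is f-diagonal and
  its Fourier slices are real, nonnegative, nonincreasing diagonal matrices.\<close>
definition tsvd_compact :: "nat \<Rightarrow> nat \<Rightarrow> nat \<Rightarrow> nat \<Rightarrow> tensor \<Rightarrow> tensor \<Rightarrow> tensor \<Rightarrow> tensor \<Rightarrow> bool" where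
  "tsvd_compact p q k s T U S V \<longleftrightarrow>
     teq s s k (tprod k p (ttr k U) U) tid \<and>
     teq s s k (tprod k q (ttr k V) V) tid \<and>
     (\<forall>a<s. \<forall>b<s. a \<noteq> b \<longrightarrow> (\<forall>t<k. S a b t = 0)) \<and>
     (\<forall>j<k. \<forall>a<s. Im (fslice k S j a a) = 0 \<and> 0 \<le> Re (fslice k S j a a)) \<and>
     (\<forall>j<k. \<forall>a<s. \<forall>b<s. a \<le> b \<longrightarrow> Re (fslice k S j b b) \<le> Re (fslice k S j a a)) \<and>
     teq p q k T (tprod k s (tprod k s U S) (ttr k V))"

text \<open>Tensor-column subspace: U (p x s) is the left t-SVD factor of T restricted to the
  s nonzero singular tubes.\<close>
definition colsub :: "nat \<Rightarrow> nat \<Rightarrow> nat \<Rightarrow> nat \<Rightarrow> tensor \<Rightarrow> tensor \<Rightarrow> bool" where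
  "colsub p q k s T U \<longleftrightarrow>
     (\<exists>S V. tsvd_compact p q k s T U S V \<and> (\<forall>a<s. \<exists>t<k. S a a t \<noteq> 0))"

definition gd_step :: "nat \<Rightarrow> nat \<Rightarrow> nat \<Rightarrow> nat \<Rightarrow> nat \<Rightarrow> (nat \<Rightarrow> tensor) \<Rightarrow> real \<Rightarrow> tensor \<Rightarrow> tensor \<Rightarrow> tensor" where
  "gd_step n r R k m As \<mu> X U =
     tprod k n (tadd tid (tscale \<mu> (AstarA n k m As
        (tsub (tprod k r X (ttr k X)) (tprod k R U (ttr k U)))))) U"

end

(*
  Work in one Fourier slice, where t-products are matrix products and the tubal singular values
  are matrix singular values.  Write V, U, W for the slices of V_X, U_t, W_t, put X = V B and
  M = V^* U W, so that s = sigma_min (V^* U) is a lower bound for M.  For a unit vector y the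
  gradient step expands as
    V^* U_{t+1} W y = (I + mu B B^* ) u + err,   u = M (I - mu M^* M) y.
  The factor I + mu B B^* stretches by 1 + mu sigma_min(X)^2; |u| >= s (1 - mu s^2) because
  lambda (1 - mu lambda)^2 is increasing on the spectrum of M^* M, which is proved through the
  first three moments of M^* M at y; and err is of second order: in mu, in the angle between the
  columns of U W and the range of V_X, and in the restricted isometry error.  The first
  inequality is sigma_min (C W) <= sigma_min C for the isometry W, by the max-min principle.
*)
theory Submission
  imports Defs "Jordan_Normal_Form.Determinant"
begin

section \<open>Complex vectors and matrices\<close>

definition cinner :: "nat \<Rightarrow> cvec \<Rightarrow> cvec \<Rightarrow> complex" where
  "cinner p x y = (\<Sum>a<p. cnj (x a) * y a)"

definition adj :: "cmat \<Rightarrow> cmat" where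
  "adj A = (\<lambda>a b. cnj (A b a))"

definition mm :: "nat \<Rightarrow> cmat \<Rightarrow> cmat \<Rightarrow> cmat" where
  "mm q A B = (\<lambda>a b. \<Sum>s<q. A a s * B s b)"

definition idm :: cmat where
  "idm = (\<lambda>a b. if a = b then 1 else 0)"

definition bounded_by :: "nat \<Rightarrow> nat \<Rightarrow> cmat \<Rightarrow> real \<Rightarrow> bool" where
  "bounded_by p q A K \<longleftrightarrow> (\<forall>x. cvnorm p (mv q A x) \<le> K * cvnorm q x)"

definition basis0 :: cvec where
  "basis0 = (\<lambda>a. if a = 0 then 1 else 0)"

lemma cvnorm_L2: "cvnorm p x = L2_set (\<lambda>a. cmod (x a)) {..<p}"
  unfolding cvnorm_def L2_set_def by simp

lemma cvnorm_nonneg [simp]: "0 \<le> cvnorm p x"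
  unfolding cvnorm_def by (intro real_sqrt_ge_zero sum_nonneg) simp

lemma cvnorm_power2: "(cvnorm p x)\<^sup>2 = (\<Sum>a<p. (cmod (x a))\<^sup>2)"
  unfolding cvnorm_def by (rule real_sqrt_pow2, rule sum_nonneg, simp)

lemma cvnorm_cong: "(\<And>a. a < p \<Longrightarrow> x a = y a) \<Longrightarrow> cvnorm p x = cvnorm p y"
  unfolding cvnorm_def by simp

lemma cvnorm_eq_0D: "cvnorm p x = 0 \<Longrightarrow> a < p \<Longrightarrow> x a = 0"
  unfolding cvnorm_L2 by (simp add: L2_set_eq_0_iff)

lemma cvnorm_eq_0I: "(\<And>a. a < p \<Longrightarrow> x a = 0) \<Longrightarrow> cvnorm p x = 0"
  unfolding cvnorm_def by simp

lemma cvnorm_basis0: "0 < p \<Longrightarrow> cvnorm p basis0 = 1"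
proof -
  assume "0 < p"
  have "(\<Sum>a<p. (cmod (basis0 a))\<^sup>2) = (\<Sum>a<p. if a = 0 then 1 else 0)"
    by (rule sum.cong) (auto simp: basis0_def)
  with \<open>0 < p\<close> show ?thesis unfolding cvnorm_def by simp
qed

lemma cvnorm_add_le: "cvnorm p (\<lambda>a. x a + y a) \<le> cvnorm p x + cvnorm p y"
proof -
  have "cvnorm p (\<lambda>a. x a + y a) \<le> L2_set (\<lambda>a. cmod (x a) + cmod (y a)) {..<p}"
    unfolding cvnorm_L2 by (rule L2_set_mono) (auto simp: norm_triangle_ineq)
  also have "\<dots> \<le> cvnorm p x + cvnorm p y"
    unfolding cvnorm_L2 by (rule L2_set_triangle_ineq)
  finally show ?thesis .
qed

lemma cvnorm_scale: "cvnorm p (\<lambda>a. c * x a) = cmod c * cvnorm p x"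
  unfolding cvnorm_L2 by (simp add: norm_mult L2_set_right_distrib)

lemma cvnorm_minus: "cvnorm p (\<lambda>a. - x a) = cvnorm p x"
  unfolding cvnorm_L2 by simp

lemma cvnorm_diff_le: "cvnorm p (\<lambda>a. x a - y a) \<le> cvnorm p x + cvnorm p y"
  using cvnorm_add_le[of p x "\<lambda>a. - y a"] cvnorm_minus[of p y] by simp

lemma cvnorm_add_ge: "cvnorm p x - cvnorm p y \<le> cvnorm p (\<lambda>a. x a + y a)"
  using cvnorm_add_le[of p "\<lambda>a. x a + y a" "\<lambda>a. - y a"] cvnorm_minus[of p y] by simp

lemma cvnorm_normalize:
  "cvnorm q x \<noteq> 0 \<Longrightarrow> cvnorm q (\<lambda>b. complex_of_real (1 / cvnorm q x) * x b) = 1"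
  unfolding cvnorm_scale by (simp add: norm_divide)

lemma cinner_self: "cinner p x x = complex_of_real ((cvnorm p x)\<^sup>2)"
  unfolding cinner_def cvnorm_power2 of_real_sum
  by (rule sum.cong) (auto simp: complex_norm_square mult.commute simp flip: of_real_power)

lemma Re_cinner_self: "Re (cinner p x x) = (cvnorm p x)\<^sup>2"
  by (simp add: cinner_self)

lemma cinner_cong:
  "(\<And>a. a < p \<Longrightarrow> x a = x' a) \<Longrightarrow> (\<And>a. a < p \<Longrightarrow> y a = y' a) \<Longrightarrow> cinner p x y = cinner p x' y'"
  unfolding cinner_def by simp

lemma cinner_commute: "cinner p y x = cnj (cinner p x y)"
  unfolding cinner_def by (simp add: mult.commute)

lemma cinner_scale:
  "cinner p (\<lambda>a. complex_of_real \<alpha> * x a) (\<lambda>a. complex_of_real \<beta> * y a) = complex_of_real (\<alpha> * \<beta>) * cinner p x y"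
  unfolding cinner_def by (simp add: sum_distrib_left ac_simps)

lemma cmod_cinner_le: "cmod (cinner p x y) \<le> cvnorm p x * cvnorm p y"
proof -
  have "cmod (cinner p x y) \<le> (\<Sum>a<p. cmod (cnj (x a) * y a))"
    unfolding cinner_def by (rule norm_sum)
  also have "\<dots> = (\<Sum>a<p. \<bar>cmod (x a)\<bar> * \<bar>cmod (y a)\<bar>)"
    by (simp add: norm_mult)
  also have "\<dots> \<le> cvnorm p x * cvnorm p y"
    unfolding cvnorm_L2 by (rule L2_set_mult_ineq)
  finally show ?thesis .
qed

lemma Re_cinner_le: "Re (cinner p x y) \<le> cvnorm p x * cvnorm p y"
  using cmod_cinner_le[of p x y] complex_Re_le_cmod[of "cinner p x y"] by linarith

lemma cvnorm_ge_of_Re_cinner: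
  assumes "A * (cvnorm p u)\<^sup>2 \<le> Re (cinner p u h)"
  shows "A * cvnorm p u \<le> cvnorm p h"
proof (cases "cvnorm p u = 0")
  case False
  hence "0 < cvnorm p u" using cvnorm_nonneg[of p u] by linarith
  moreover have "A * (cvnorm p u)\<^sup>2 \<le> cvnorm p u * cvnorm p h"
    using assms Re_cinner_le[of p u h] by linarith
  ultimately show ?thesis by (simp add: power2_eq_square)
qed simp

lemma cvnorm_add_power2:
  "(cvnorm p (\<lambda>a. x a + y a))\<^sup>2 = (cvnorm p x)\<^sup>2 + 2 * Re (cinner p x y) + (cvnorm p y)\<^sup>2"
proof -
  have "complex_of_real ((cvnorm p (\<lambda>a. x a + y a))\<^sup>2)
      = cinner p x x + cinner p x y + cinner p y x + cinner p y y"
    unfolding cinner_self[symmetric] unfolding cinner_def by (simp add: algebra_simps sum.distrib)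
  then have "(cvnorm p (\<lambda>a. x a + y a))\<^sup>2 = Re (cinner p x x + cinner p x y + cinner p y x + cinner p y y)"
    by (metis Re_complex_of_real)
  thus ?thesis by (simp add: cinner_commute[of p y x] Re_cinner_self)
qed

lemma cvnorm_lincomb_power2:
  "(cvnorm p (\<lambda>a. complex_of_real \<alpha> * x a + complex_of_real \<beta> * y a))\<^sup>2
     = \<alpha>\<^sup>2 * (cvnorm p x)\<^sup>2 + 2 * \<alpha> * \<beta> * Re (cinner p x y) + \<beta>\<^sup>2 * (cvnorm p y)\<^sup>2"
  using cvnorm_add_power2[of p "\<lambda>a. complex_of_real \<alpha> * x a" "\<lambda>a. complex_of_real \<beta> * y a"]
  unfolding cinner_scale cvnorm_scale by (simp add: power_mult_distrib)

lemma mv_cong: "(\<And>b. b < q \<Longrightarrow> x b = y b) \<Longrightarrow> mv q A x = mv q A y"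
  unfolding mv_def by (rule ext) simp

lemma mv_cong_mat: "(\<And>b. b < q \<Longrightarrow> A a b = B a b) \<Longrightarrow> mv q A x a = mv q B x a"
  unfolding mv_def by simp

lemma mv_zero: "(\<And>b. b < q \<Longrightarrow> x b = 0) \<Longrightarrow> mv q A x a = 0"
  unfolding mv_def by simp

lemma mv_add: "mv q A (\<lambda>b. x b + y b) = (\<lambda>a. mv q A x a + mv q A y a)"
  unfolding mv_def by (simp add: distrib_left sum.distrib)

lemma mv_diff: "mv q A (\<lambda>b. x b - y b) = (\<lambda>a. mv q A x a - mv q A y a)"
  unfolding mv_def by (simp add: right_diff_distrib sum_subtractf)

lemma mv_scale: "mv q A (\<lambda>b. c * x b) = (\<lambda>a. c * mv q A x a)"
  unfolding mv_def by (simp add: sum_distrib_left mult.left_commute)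

lemma mv_mm: "mv q (mm m A B) x = mv m A (mv q B x)"
  unfolding mv_def mm_def
  by (rule ext) (simp add: sum_distrib_left sum_distrib_right mult.assoc sum.swap[of _ "{..<q}"])

lemma mv_idm: "a < n \<Longrightarrow> mv n idm x a = x a"
proof -
  assume "a < n"
  have "mv n idm x a = (\<Sum>b<n. if a = b then x b else 0)"
    unfolding mv_def idm_def by (rule sum.cong) auto
  with \<open>a < n\<close> show ?thesis by simp
qed

lemma mm_assoc: "mm q (mm p A B) C = mm p A (mm q B C)"
  unfolding mm_def
  by (rule ext, rule ext) (simp add: sum_distrib_left sum_distrib_right mult.assoc sum.swap[of _ "{..<q}"])

lemma mm_idm_left: "a < r \<Longrightarrow> mm r idm V a b = V a b"
proof -
  assume "a < r"
  have "mm r idm V a b = (\<Sum>c<r. if a = c then V c b else 0)"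
    unfolding mm_def idm_def by (rule sum.cong) auto
  with \<open>a < r\<close> show ?thesis by simp
qed

lemma adj_adj [simp]: "adj (adj A) = A"
  unfolding adj_def by simp

lemma adj_mm: "adj (mm q A B) = mm q (adj B) (adj A)"
  unfolding adj_def mm_def by (simp add: mult.commute)

lemma cinner_adj: "cinner p x (mv q A y) = cinner q (mv p (adj A) x) y"
  unfolding cinner_def mv_def adj_def
  by (simp add: sum_distrib_left sum_distrib_right mult.assoc mult.left_commute
      sum.swap[of _ "{..<p}"])

lemma cmod_mv_le: "cmod (mv q A x a) \<le> L2_set (\<lambda>b. cmod (A a b)) {..<q} * cvnorm q x"
proof -
  have "cmod (mv q A x a) \<le> (\<Sum>b<q. cmod (A a b * x b))"
    unfolding mv_def by (rule norm_sum)
  also have "\<dots> = (\<Sum>b<q. \<bar>cmod (A a b)\<bar> * \<bar>cmod (x b)\<bar>)"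
    by (simp add: norm_mult)
  also have "\<dots> \<le> L2_set (\<lambda>b. cmod (A a b)) {..<q} * cvnorm q x"
    unfolding cvnorm_L2 by (rule L2_set_mult_ineq)
  finally show ?thesis .
qed

lemma bounded_byD: "bounded_by p q A K \<Longrightarrow> cvnorm p (mv q A x) \<le> K * cvnorm q x"
  unfolding bounded_by_def by blast

lemma bounded_by_mono: "bounded_by p q A K \<Longrightarrow> K \<le> K' \<Longrightarrow> bounded_by p q A K'"
  unfolding bounded_by_def using cvnorm_nonneg mult_right_mono order_trans by metis

lemma bounded_by_exists: "\<exists>K\<ge>0. bounded_by p q A K"
proof -
  define K where "K = sqrt (\<Sum>a<p. (L2_set (\<lambda>b. cmod (A a b)) {..<q})\<^sup>2)"
  have "bounded_by p q A K" unfolding bounded_by_def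
  proof
    fix x
    have "(cvnorm p (mv q A x))\<^sup>2 = (\<Sum>a<p. (cmod (mv q A x a))\<^sup>2)"
      by (rule cvnorm_power2)
    also have "\<dots> \<le> (\<Sum>a<p. (L2_set (\<lambda>b. cmod (A a b)) {..<q} * cvnorm q x)\<^sup>2)"
      by (intro sum_mono power_mono cmod_mv_le) simp
    also have "\<dots> = K\<^sup>2 * (cvnorm q x)\<^sup>2"
      unfolding K_def
      by (subst real_sqrt_pow2) (auto intro: sum_nonneg simp: power_mult_distrib sum_distrib_right)
    finally have "(cvnorm p (mv q A x))\<^sup>2 \<le> (K * cvnorm q x)\<^sup>2"
      by (simp add: power_mult_distrib)
    thus "cvnorm p (mv q A x) \<le> K * cvnorm q x"
      by (rule power2_le_imp_le) (simp add: K_def sum_nonneg)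
  qed
  thus ?thesis by (intro exI[of _ K]) (auto simp: K_def intro!: sum_nonneg)
qed

lemma cvnorm_mv_ge_of_unit:
  assumes "\<And>x. cvnorm q x = 1 \<Longrightarrow> s \<le> cvnorm p (mv q A x)"
  shows "s * cvnorm q x \<le> cvnorm p (mv q A x)"
proof (cases "cvnorm q x = 0")
  case False
  let ?c = "complex_of_real (1 / cvnorm q x)"
  have "s \<le> cvnorm p (mv q A (\<lambda>b. ?c * x b))"
    using assms cvnorm_normalize[OF False] by blast
  hence "s \<le> (1 / cvnorm q x) * cvnorm p (mv q A x)"
    unfolding mv_scale cvnorm_scale by (simp add: norm_divide)
  moreover have "0 < cvnorm q x" using False cvnorm_nonneg[of q x] by linarith
  ultimately show ?thesis by (simp add: field_simps)
qed simp

lemma bounded_byI_unit: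
  assumes "\<And>x. cvnorm q x = 1 \<Longrightarrow> cvnorm p (mv q A x) \<le> K"
  shows "bounded_by p q A K"
  unfolding bounded_by_def
proof
  fix x
  show "cvnorm p (mv q A x) \<le> K * cvnorm q x"
  proof (cases "cvnorm q x = 0")
    case True
    have "cvnorm p (mv q A x) = 0"
      by (intro cvnorm_eq_0I mv_zero cvnorm_eq_0D[OF True])
    thus ?thesis using True by simp
  next
    case False
    let ?c = "complex_of_real (1 / cvnorm q x)"
    have "cvnorm p (mv q A (\<lambda>b. ?c * x b)) \<le> K"
      using assms cvnorm_normalize[OF False] by blast
    hence "(1 / cvnorm q x) * cvnorm p (mv q A x) \<le> K"
      unfolding mv_scale cvnorm_scale by (simp add: norm_divide)
    moreover have "0 < cvnorm q x" using False cvnorm_nonneg[of q x] by linarith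
    ultimately show ?thesis by (simp add: field_simps)
  qed
qed

lemma bounded_by_specnorm:
  assumes "0 < q"
  shows "bounded_by p q A (specnorm A p q)"
proof (rule bounded_byI_unit)
  fix x assume x: "cvnorm q x = 1"
  obtain K where K: "bounded_by p q A K" using bounded_by_exists by blast
  show "cvnorm p (mv q A x) \<le> specnorm A p q"
    unfolding specnorm_def
  proof (rule cSup_upper)
    show "cvnorm p (mv q A x) \<in> {cvnorm p (mv q A x) |x. cvnorm q x = 1}" using x by blast
    show "bdd_above {cvnorm p (mv q A x) |x. cvnorm q x = 1}"
      by (rule bdd_aboveI[of _ K]) (use bounded_byD[OF K] in \<open>auto, metis mult.right_neutral\<close>)
  qed
qed

lemma bounded_by_mm:
  assumes "bounded_by p m A K1" and "bounded_by m q B K2" and "0 \<le> K1"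
  shows "bounded_by p q (mm m A B) (K1 * K2)"
  unfolding bounded_by_def mv_mm
proof
  fix x
  have "cvnorm p (mv m A (mv q B x)) \<le> K1 * cvnorm m (mv q B x)"
    using assms(1) bounded_byD by blast
  also have "\<dots> \<le> K1 * (K2 * cvnorm q x)"
    using assms(2,3) bounded_byD by (intro mult_left_mono) auto
  finally show "cvnorm p (mv m A (mv q B x)) \<le> K1 * K2 * cvnorm q x"
    by (simp add: mult.assoc)
qed

lemma cvnorm_adjoint_le:
  assumes "\<And>x. cvnorm m (T x) \<le> K * cvnorm r x"
    and "\<And>x q. cinner r x (T' q) = cinner m (T x) q" and "0 \<le> K"
  shows "cvnorm r (T' q) \<le> K * cvnorm m q"
proof -
  let ?y = "T' q"
  have "(cvnorm r ?y)\<^sup>2 = Re (cinner m (T ?y) q)"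
    by (simp add: Re_cinner_self[symmetric] assms(2))
  also have "\<dots> \<le> cvnorm m (T ?y) * cvnorm m q" by (rule Re_cinner_le)
  also have "\<dots> \<le> K * cvnorm r ?y * cvnorm m q"
    by (intro mult_right_mono assms(1)) simp
  finally have *: "(cvnorm r ?y)\<^sup>2 \<le> K * cvnorm m q * cvnorm r ?y"
    by (simp add: ac_simps)
  show ?thesis
  proof (cases "cvnorm r ?y = 0")
    case True
    thus ?thesis using assms(3) by simp
  next
    case False
    hence "0 < cvnorm r ?y" using cvnorm_nonneg[of r ?y] by linarith
    thus ?thesis using * by (simp add: power2_eq_square)
  qed
qed

lemma bounded_by_adj:
  assumes "bounded_by p q A K" and "0 \<le> K"
  shows "bounded_by q p (adj A) K"
  unfolding bounded_by_def
proof
  fix x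
  show "cvnorm q (mv p (adj A) x) \<le> K * cvnorm p x"
    by (rule cvnorm_adjoint_le[where T = "mv q A"])
      (use bounded_byD[OF assms(1)] assms(2) in \<open>auto simp: cinner_adj\<close>)
qed

section \<open>Isometries and singular values\<close>

lemma isometry_adj_mv:
  assumes "isometry q i V" "a < i"
  shows "mv q (adj V) (mv i V y) a = y a"
proof -
  have "mv q (adj V) (mv i V y) a = (\<Sum>b<i. (\<Sum>c<q. cnj (V c a) * V c b) * y b)"
    unfolding mv_def adj_def
    by (simp add: sum_distrib_left sum_distrib_right mult.assoc sum.swap[of _ "{..<q}"])
  also have "\<dots> = (\<Sum>b<i. if a = b then y b else 0)"
    using assms unfolding isometry_def by (intro sum.cong) auto
  finally show ?thesis using assms(2) by simp
qed

lemma cvnorm_isometry: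
  assumes "isometry q i V"
  shows "cvnorm q (mv i V y) = cvnorm i y"
proof -
  have "cinner q (mv i V y) (mv i V y) = cinner i (mv q (adj V) (mv i V y)) y"
    by (rule cinner_adj)
  also have "\<dots> = cinner i y y"
    by (rule cinner_cong) (auto simp: isometry_adj_mv[OF assms])
  finally have "(cvnorm q (mv i V y))\<^sup>2 = (cvnorm i y)\<^sup>2"
    by (metis Re_cinner_self)
  thus ?thesis by (simp add: power2_eq_iff_nonneg)
qed

lemma bounded_by_isometry: "isometry q i V \<Longrightarrow> bounded_by q i V 1"
  unfolding bounded_by_def using cvnorm_isometry by simp

lemma bounded_by_adj_isometry: "isometry q i V \<Longrightarrow> bounded_by i q (adj V) 1"
  by (rule bounded_by_adj[OF bounded_by_isometry]) auto

lemma isometry_iff_mm: "isometry q i V \<longleftrightarrow> (\<forall>a<i. \<forall>b<i. mm q (adj V) V a b = idm a b)"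
  unfolding isometry_def mm_def adj_def idm_def by simp

lemma isometry_idm: "isometry n n idm"
  unfolding isometry_def
proof (intro allI impI)
  fix a b assume "a < n" "b < n"
  have "(\<Sum>c<n. cnj (idm c a) * idm c b) = (\<Sum>c<n. if c = a then (if a = b then 1 else 0) else 0)"
    unfolding idm_def by (rule sum.cong) auto
  with \<open>a < n\<close> show "(\<Sum>c<n. cnj (idm c a) * idm c b) = (if a = b then 1 else 0)" by simp
qed

lemma isometry_mm:
  assumes W: "isometry R r W" and V: "isometry r i V"
  shows "isometry R i (mm r W V)"
  unfolding isometry_iff_mm
proof (intro allI impI)
  fix a b assume a: "a < i" and b: "b < i"
  have "mm R (adj (mm r W V)) (mm r W V) a b = mm r (adj V) (mm r (mm R (adj W) W) V) a b"
    by (simp add: adj_mm mm_assoc)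
  also have "\<dots> = mm r (adj V) (mm r idm V) a b"
    using W unfolding isometry_iff_mm mm_def by (intro sum.cong refl) auto
  also have "\<dots> = mm r (adj V) V a b"
    unfolding mm_def[of r "adj V"] by (intro sum.cong refl) (simp add: mm_idm_left)
  also have "\<dots> = idm a b" using V a b unfolding isometry_iff_mm by simp
  finally show "mm R (adj (mm r W V)) (mm r W V) a b = idm a b" .
qed

text \<open>Counting \<open>\<Sum>\<^sub>c \<Sum>\<^sub>a |W c a|\<^sup>2\<close> by columns gives \<open>r\<close>, by rows at most \<open>R\<close>.\<close>
lemma isometry_dim_le:
  assumes W: "isometry R r W"
  shows "r \<le> R"
proof -
  define \<rho> where "\<rho> c = (\<Sum>a<r. (cmod (W c a))\<^sup>2)" for c
  have row: "\<rho> c \<le> 1" if c: "c < R" for c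
  proof -
    define x where "x = (\<lambda>a. cnj (W c a))"
    have x: "(cvnorm r x)\<^sup>2 = \<rho> c" unfolding cvnorm_power2 x_def \<rho>_def by simp
    have "mv r W x c = complex_of_real (\<rho> c)"
      unfolding mv_def x_def \<rho>_def of_real_sum by (rule sum.cong[OF refl]) (metis complex_norm_square)
    moreover have \<rho>0: "0 \<le> \<rho> c" unfolding \<rho>_def by (simp add: sum_nonneg)
    ultimately have "(\<rho> c)\<^sup>2 = (cmod (mv r W x c))\<^sup>2" by simp
    also have "\<dots> \<le> (cvnorm R (mv r W x))\<^sup>2"
      unfolding cvnorm_power2 using c by (intro member_le_sum) auto
    also have "\<dots> = \<rho> c"
      using cvnorm_isometry[OF W] x by simp
    finally have "\<rho> c * \<rho> c \<le> \<rho> c * 1" by (simp add: power2_eq_square)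
    thus ?thesis using \<rho>0 by (cases "\<rho> c = 0") (auto simp: mult_le_cancel_left)
  qed
  have col: "(\<Sum>c<R. (cmod (W c a))\<^sup>2) = 1" if a: "a < r" for a
  proof -
    have "complex_of_real (\<Sum>c<R. (cmod (W c a))\<^sup>2) = (\<Sum>c<R. cnj (W c a) * W c a)"
      unfolding of_real_sum by (rule sum.cong[OF refl]) (metis complex_norm_square mult.commute)
    also have "\<dots> = 1" using W a unfolding isometry_def by simp
    finally show ?thesis using of_real_eq_1_iff by blast
  qed
  have "real r = (\<Sum>a<r. \<Sum>c<R. (cmod (W c a))\<^sup>2)" using col by simp
  also have "\<dots> = (\<Sum>c<R. \<rho> c)" unfolding \<rho>_def by (rule sum.swap)
  also have "\<dots> \<le> (\<Sum>c<R. 1)" by (intro sum_mono row) simp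
  finally show ?thesis by simp
qed

lemma mv_as_mult_mat_vec:
  assumes "a < n" "w \<in> carrier_vec n"
  shows "(Matrix.mat n n (\<lambda>(i,j). T i j) *\<^sub>v w) $ a = mv n T (\<lambda>b. w $ b) a"
  using assms unfolding mv_def mult_mat_vec_def scalar_prod_def
  by (simp add: atLeast0LessThan)

text \<open>The only use of the Jordan normal form library: a matrix with zero determinant has a
  nontrivial kernel, otherwise it is invertible.\<close>
lemma square_mat_kernel_or_surj:
  "(\<exists>y. cvnorm n y = 1 \<and> (\<forall>a<n. mv n T y a = 0)) \<or> (\<forall>u. \<exists>y. \<forall>a<n. mv n T y a = u a)"
proof -
  define A where "A = Matrix.mat n n (\<lambda>(i,j). T i j)"
  have A: "A \<in> carrier_mat n n" unfolding A_def by simp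
  show ?thesis
  proof (cases "det A = 0")
    case True
    then obtain v where v: "v \<in> carrier_vec n" "v \<noteq> 0\<^sub>v n" "A *\<^sub>v v = 0\<^sub>v n"
      using det_0_iff_vec_prod_zero[OF A] by blast
    define y where "y = (\<lambda>b. v $ b)"
    have "cvnorm n y \<noteq> 0"
    proof
      assume "cvnorm n y = 0"
      hence "v = 0\<^sub>v n"
        using v(1) cvnorm_eq_0D unfolding y_def by (intro eq_vecI) auto
      thus False using v(2) by simp
    qed
    have "mv n T y a = 0" if "a < n" for a
      using mv_as_mult_mat_vec[OF that v(1), of T] v(3) that unfolding A_def y_def by simp
    hence "\<forall>a<n. mv n T (\<lambda>b. complex_of_real (1 / cvnorm n y) * y b) a = 0"
      unfolding mv_scale by simp
    with cvnorm_normalize[OF \<open>cvnorm n y \<noteq> 0\<close>] show ?thesis by blast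
  next
    case False
    from det_non_zero_imp_unit[OF A False]
    obtain B where B: "B \<in> carrier_mat n n" "A * B = 1\<^sub>m n"
      unfolding Units_def ring_mat_def by auto
    have "\<exists>y. \<forall>a<n. mv n T y a = u a" for u
    proof -
      define w where "w = B *\<^sub>v Matrix.vec n u"
      have w: "w \<in> carrier_vec n" unfolding w_def using B by simp
      have "A *\<^sub>v w = Matrix.vec n u"
        unfolding w_def using B A by (simp add: assoc_mult_mat_vec[symmetric])
      hence "\<forall>a<n. mv n T (\<lambda>b. w $ b) a = u a"
        using mv_as_mult_mat_vec[OF _ w, of _ T] unfolding A_def by (metis index_vec)
      thus ?thesis by blast
    qed
    thus ?thesis by blast
  qed
qed

lemma square_mat_surj:
  assumes "\<And>y. cvnorm n y = 1 \<Longrightarrow> cvnorm n (mv n T y) \<noteq> 0"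
  shows "\<exists>y. \<forall>a<n. mv n T y a = u a"
  using square_mat_kernel_or_surj[of n T] assms cvnorm_eq_0I by metis

lemma isometry_square_surj: "isometry n n V \<Longrightarrow> \<exists>y. \<forall>a<n. mv n V y a = u a"
  by (rule square_mat_surj) (simp add: cvnorm_isometry)

lemma cvnorm_adj_ge:
  assumes low: "\<And>e. \<sigma> * cvnorm r e \<le> cvnorm r (mv r B e)" and \<sigma>: "0 < \<sigma>"
  shows "\<sigma> * cvnorm r z \<le> cvnorm r (mv r (adj B) z)"
proof -
  have "cvnorm r (mv r B y) \<noteq> 0" if "cvnorm r y = 1" for y
    using low[of y] \<sigma> that by auto
  then obtain e where e: "\<forall>a<r. mv r B e a = z a"
    using square_mat_surj by blast
  have ze: "cvnorm r z = cvnorm r (mv r B e)" using e by (intro cvnorm_cong) auto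
  have "(cvnorm r z)\<^sup>2 = Re (cinner r z (mv r B e))"
    by (metis Re_cinner_self cinner_cong e)
  also have "\<dots> \<le> cvnorm r (mv r (adj B) z) * cvnorm r e"
    unfolding cinner_adj by (rule Re_cinner_le)
  finally have "\<sigma> * (cvnorm r z)\<^sup>2 \<le> cvnorm r (mv r (adj B) z) * (\<sigma> * cvnorm r e)"
    using \<sigma> by (simp add: mult_left_mono ac_simps)
  also have "\<dots> \<le> cvnorm r (mv r (adj B) z) * cvnorm r z"
    using low[of e] ze by (intro mult_left_mono) auto
  finally have *: "\<sigma> * (cvnorm r z)\<^sup>2 \<le> cvnorm r (mv r (adj B) z) * cvnorm r z" .
  show ?thesis
  proof (cases "cvnorm r z = 0")
    case False
    hence "0 < cvnorm r z" using cvnorm_nonneg[of r z] by linarith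
    thus ?thesis using * by (simp add: power2_eq_square)
  qed simp
qed

lemma Inf_cvnorm_bdd_below: "bdd_below {cvnorm p (mv q A (mv i V y)) |y. cvnorm i y = 1}"
  by (rule bdd_belowI[of _ 0]) auto

lemma sigma_set_bdd_above:
  assumes "0 < i"
  shows "bdd_above {Inf {cvnorm p (mv q A (mv i V y)) |y. cvnorm i y = 1} |V. isometry q i V}"
proof -
  obtain K where K: "bounded_by p q A K" using bounded_by_exists by blast
  show ?thesis
  proof (rule bdd_aboveI[of _ K], clarify)
    fix V assume V: "isometry q i V"
    have "Inf {cvnorm p (mv q A (mv i V y)) |y. cvnorm i y = 1} \<le> cvnorm p (mv q A (mv i V basis0))"
      by (rule cInf_lower[OF _ Inf_cvnorm_bdd_below]) (use cvnorm_basis0[OF assms] in blast)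
    also have "\<dots> \<le> K * cvnorm q (mv i V basis0)" by (rule bounded_byD[OF K])
    also have "\<dots> = K" using cvnorm_isometry[OF V] cvnorm_basis0[OF assms] by simp
    finally show "Inf {cvnorm p (mv q A (mv i V y)) |y. cvnorm i y = 1} \<le> K" .
  qed
qed

lemma sigma_geI:
  assumes "0 < i" "isometry q i V"
    "\<And>y. cvnorm i y = 1 \<Longrightarrow> b \<le> cvnorm p (mv q A (mv i V y))"
  shows "b \<le> sigma i A p q"
proof -
  have "b \<le> Inf {cvnorm p (mv q A (mv i V y)) |y. cvnorm i y = 1}"
    by (rule cInf_greatest) (use assms cvnorm_basis0 in auto)
  also have "\<dots> \<le> sigma i A p q" unfolding sigma_def
    by (rule cSup_upper[OF _ sigma_set_bdd_above[OF assms(1)]]) (use assms(2) in blast)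
  finally show ?thesis .
qed

lemma sigma_leI:
  assumes "isometry q i V0"
    "\<And>V. isometry q i V \<Longrightarrow> \<exists>y. cvnorm i y = 1 \<and> cvnorm p (mv q A (mv i V y)) \<le> b"
  shows "sigma i A p q \<le> b"
  unfolding sigma_def
proof (rule cSup_least)
  show "{Inf {cvnorm p (mv q A (mv i V y)) |y. cvnorm i y = 1} |V. isometry q i V} \<noteq> {}"
    using assms(1) by blast
next
  fix s assume "s \<in> {Inf {cvnorm p (mv q A (mv i V y)) |y. cvnorm i y = 1} |V. isometry q i V}"
  then obtain V where V: "isometry q i V"
    and s: "s = Inf {cvnorm p (mv q A (mv i V y)) |y. cvnorm i y = 1}"
    by blast
  obtain y where y: "cvnorm i y = 1" "cvnorm p (mv q A (mv i V y)) \<le> b"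
    using assms(2)[OF V] by blast
  show "s \<le> b" unfolding s
    by (rule cInf_lower2[OF _ y(2) Inf_cvnorm_bdd_below]) (use y in blast)
qed

lemma sigma_nonneg: "0 < i \<Longrightarrow> isometry q i V \<Longrightarrow> 0 \<le> sigma i A p q"
  by (rule sigma_geI) simp_all

lemma sigma_mm_isometry_le:
  assumes "0 < r" and W: "isometry R r W"
  shows "sigma r (mm R C W) p r \<le> sigma r C p R"
  unfolding sigma_def[of r "mm R C W"]
proof (rule cSup_least)
  show "{Inf {cvnorm p (mv r (mm R C W) (mv r V y)) |y. cvnorm r y = 1} |V. isometry r r V} \<noteq> {}"
    using isometry_idm by blast
next
  fix x assume "x \<in> {Inf {cvnorm p (mv r (mm R C W) (mv r V y)) |y. cvnorm r y = 1} |V. isometry r r V}"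
  then obtain V where V: "isometry r r V"
    and x: "x = Inf {cvnorm p (mv R C (mv r (mm r W V) y)) |y. cvnorm r y = 1}"
    by (auto simp: mv_mm)
  show "x \<le> sigma r C p R" unfolding x sigma_def
    by (rule cSup_upper[OF _ sigma_set_bdd_above[OF assms(1)]]) (use isometry_mm[OF W V] in blast)
qed

text \<open>If \<open>C = M W\<^sup>*\<close> with \<open>W\<close> an isometry, every \<open>r\<close>-dimensional test subspace \<open>V\<close> of the
  max-min principle meets a unit vector \<open>y\<close> with \<open>|C V y| \<le> |M x|\<close>: either \<open>W\<^sup>* V\<close> is singular,
  or it maps some \<open>y\<^sub>1\<close> with \<open>|y\<^sub>1| \<ge> 1\<close> to \<open>x\<close>.\<close>
lemma sigma_le_cvnorm_factor:
  assumes W: "isometry R r W"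
    and C: "\<forall>a<r. \<forall>b<R. C a b = mm r M (adj W) a b"
    and x: "cvnorm r x = 1"
  shows "sigma r C r R \<le> cvnorm r (mv r M x)"
proof (rule sigma_leI[OF W])
  fix V assume V: "isometry R r V"
  define T where "T = mm R (adj W) V"
  have CV: "cvnorm r (mv R C (mv r V y)) = cvnorm r (mv r M (mv r T y))" for y
  proof (rule cvnorm_cong)
    fix a assume "a < r"
    hence "mv R C (mv r V y) a = mv R (mm r M (adj W)) (mv r V y) a"
      using C by (intro mv_cong_mat) simp
    thus "mv R C (mv r V y) a = mv r M (mv r T y) a" unfolding T_def by (simp add: mv_mm)
  qed
  have T: "cvnorm r (mv r T y) \<le> cvnorm r y" for y
  proof -
    have "cvnorm r (mv r T y) = cvnorm r (mv R (adj W) (mv r V y))" unfolding T_def by (simp add: mv_mm)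
    also have "\<dots> \<le> 1 * cvnorm R (mv r V y)" by (rule bounded_byD[OF bounded_by_adj_isometry[OF W]])
    finally show ?thesis using cvnorm_isometry[OF V] by simp
  qed
  show "\<exists>y. cvnorm r y = 1 \<and> cvnorm r (mv R C (mv r V y)) \<le> cvnorm r (mv r M x)"
    using square_mat_kernel_or_surj[of r T]
  proof
    assume "\<exists>y. cvnorm r y = 1 \<and> (\<forall>a<r. mv r T y a = 0)"
    then obtain y where y: "cvnorm r y = 1" "\<forall>a<r. mv r T y a = 0" by blast
    have "mv r M (mv r T y) = mv r M (\<lambda>_. 0)" by (rule mv_cong) (use y in simp)
    hence "cvnorm r (mv R C (mv r V y)) = 0" unfolding CV by (simp add: mv_def cvnorm_def)
    thus ?thesis using y(1) by auto
  next
    assume "\<forall>u. \<exists>y. \<forall>a<r. mv r T y a = u a"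
    then obtain y1 where y1: "\<forall>a<r. mv r T y1 a = x a" by blast
    have "cvnorm r (mv r T y1) = 1" using y1 x by (metis cvnorm_cong)
    hence n1: "1 \<le> cvnorm r y1" using T[of y1] by simp
    let ?c = "complex_of_real (1 / cvnorm r y1)"
    define y where "y = (\<lambda>b. ?c * y1 b)"
    have "cvnorm r y = 1" unfolding y_def using n1 by (intro cvnorm_normalize) simp
    moreover have "mv r M (mv r T y1) = mv r M x" by (rule mv_cong) (use y1 in simp)
    hence "cvnorm r (mv R C (mv r V y)) = (1 / cvnorm r y1) * cvnorm r (mv r M x)"
      unfolding CV y_def mv_scale cvnorm_scale by (simp add: norm_divide)
    moreover have "(1 / cvnorm r y1) * cvnorm r (mv r M x) \<le> cvnorm r (mv r M x)"
      using n1 by (intro mult_left_le_one_le) auto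
    ultimately show ?thesis by auto
  qed
qed

lemma sigma_mult_cvnorm_le_factor:
  assumes "isometry R r W" and "\<forall>a<r. \<forall>b<R. C a b = mm r M (adj W) a b"
  shows "sigma r C r R * cvnorm r x \<le> cvnorm r (mv r M x)"
  by (rule cvnorm_mv_ge_of_unit) (rule sigma_le_cvnorm_factor[OF assms])

section \<open>Fourier slices\<close>

definition twiddle :: "nat \<Rightarrow> nat \<Rightarrow> nat \<Rightarrow> complex" where
  "twiddle k j t = cis (- 2 * pi * real j * real t / real k)"

lemma fslice_twiddle: "fslice k T j a b = (\<Sum>t<k. complex_of_real (T a b t) * twiddle k j t)"
  unfolding fslice_def twiddle_def by simp

lemma twiddle_add: "twiddle k j (x + y) = twiddle k j x * twiddle k j y"
proof -
  have "- 2 * pi * real j * real (x + y) / real k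
      = (- 2 * pi * real j * real x + - 2 * pi * real j * real y) / real k"
    by (simp add: algebra_simps)
  also have "\<dots> = - 2 * pi * real j * real x / real k + - 2 * pi * real j * real y / real k"
    by (rule add_divide_distrib)
  finally show ?thesis unfolding twiddle_def cis_mult by simp
qed

lemma twiddle_mult_self: "0 < k \<Longrightarrow> twiddle k j (k * m) = 1"
proof -
  assume "0 < k"
  hence "- 2 * pi * real j * real (k * m) / real k = 2 * pi * of_int (- int (j * m))"
    by (simp add: field_simps)
  thus ?thesis unfolding twiddle_def by (simp del: of_int_minus)
qed

lemma twiddle_mod: "0 < k \<Longrightarrow> twiddle k j (x mod k) = twiddle k j x"
proof -
  assume k: "0 < k"
  have "twiddle k j x = twiddle k j (x mod k + k * (x div k))" by (metis mod_mult_div_eq)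
  also have "\<dots> = twiddle k j (x mod k)" by (simp only: twiddle_add twiddle_mult_self[OF k] mult_1_right)
  finally show ?thesis by simp
qed

lemma twiddle_cong: "0 < k \<Longrightarrow> x mod k = y mod k \<Longrightarrow> twiddle k j x = twiddle k j y"
  by (metis twiddle_mod)

lemma twiddle_rev: "0 < k \<Longrightarrow> u < k \<Longrightarrow> twiddle k j ((k - u) mod k) = cnj (twiddle k j u)"
proof -
  assume k: "0 < k" and u: "u < k"
  have "twiddle k j ((k - u) mod k) * twiddle k j u = twiddle k j (k * 1)"
    unfolding twiddle_add[symmetric] using u by (intro twiddle_cong[OF k]) (simp add: mod_add_left_eq)
  also have "\<dots> = cnj (twiddle k j u) * twiddle k j u"
    unfolding twiddle_mult_self[OF k] by (simp add: twiddle_def cis_cnj cis_mult)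
  finally show ?thesis by (simp add: twiddle_def)
qed

lemma sum_rotate:
  assumes "t' \<le> (k::nat)"
  shows "(\<Sum>t<k. h ((t + k - t') mod k)) = (\<Sum>t<k. h t)"
proof (rule sum.reindex_bij_witness[where i = "\<lambda>u. (u + t') mod k" and j = "\<lambda>t. (t + k - t') mod k"])
  fix t assume t: "t \<in> {..<k}"
  have "((t + k - t') mod k + t') mod k = (t + k - t' + t') mod k" by (simp only: mod_add_left_eq)
  also have "t + k - t' + t' = t + k" using assms by simp
  finally show "((t + k - t') mod k + t') mod k = t" using t by simp
  show "(t + k - t') mod k \<in> {..<k}" using t by simp
next
  fix u assume u: "u \<in> {..<k}"
  have "(u + t') mod k + k - t' = (u + t') mod k + (k - t')" using assms by simp
  hence "((u + t') mod k + k - t') mod k = ((u + t') + (k - t')) mod k" by (metis mod_add_left_eq)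
  also have "(u + t') + (k - t') = u + k" using assms by simp
  finally show "((u + t') mod k + k - t') mod k = u" using u by simp
  show "(u + t') mod k \<in> {..<k}" using u by simp
qed simp

lemma sum_reverse: "(\<Sum>t<k. h ((k - t) mod k)) = (\<Sum>t<k. h (t::nat))"
proof -
  have "(k - (k - t) mod k) mod k = t" if "t < k" for t
    using that by (cases "t = 0") auto
  thus ?thesis
    by (intro sum.reindex_bij_witness[where i = "\<lambda>u. (k - u) mod k" and j = "\<lambda>t. (k - t) mod k"]) auto
qed

lemma fslice_shift:
  assumes k: "0 < k" and t': "t' < k"
  shows "(\<Sum>t<k. complex_of_real (B s b ((t + k - t') mod k)) * twiddle k j t) = twiddle k j t' * fslice k B j s b"
proof -
  have tw: "twiddle k j t = twiddle k j t' * twiddle k j ((t + k - t') mod k)" for t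
  proof -
    have "(t' + (t + k - t') mod k) mod k = (t' + (t + k - t')) mod k" by (simp add: mod_add_right_eq)
    also have "t' + (t + k - t') = t + k" using t' by simp
    finally show ?thesis unfolding twiddle_add[symmetric] by (intro twiddle_cong[OF k]) simp
  qed
  have "(\<Sum>t<k. complex_of_real (B s b ((t + k - t') mod k)) * twiddle k j t)
      = (\<Sum>t<k. twiddle k j t' * (complex_of_real (B s b ((t + k - t') mod k)) * twiddle k j ((t + k - t') mod k)))"
  proof (rule sum.cong[OF refl])
    fix t
    show "complex_of_real (B s b ((t + k - t') mod k)) * twiddle k j t
        = twiddle k j t' * (complex_of_real (B s b ((t + k - t') mod k)) * twiddle k j ((t + k - t') mod k))"
      unfolding tw[of t] by (rule mult.left_commute)
  qed
  also have "\<dots> = twiddle k j t' * (\<Sum>t<k. complex_of_real (B s b ((t + k - t') mod k)) * twiddle k j ((t + k - t') mod k))"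
    by (simp add: sum_distrib_left)
  also have "(\<Sum>t<k. complex_of_real (B s b ((t + k - t') mod k)) * twiddle k j ((t + k - t') mod k)) = fslice k B j s b"
    unfolding fslice_twiddle using sum_rotate[of t' k "\<lambda>u. complex_of_real (B s b u) * twiddle k j u"] t' by simp
  finally show ?thesis .
qed

lemma fslice_tprod_apply:
  assumes k: "0 < k"
  shows "fslice k (tprod k m A B) j a b = mm m (fslice k A j) (fslice k B j) a b"
proof -
  have "fslice k (tprod k m A B) j a b = (\<Sum>t<k. \<Sum>s<m. \<Sum>t'<k. complex_of_real (A a s t') *
      (complex_of_real (B s b ((t + k - t') mod k)) * twiddle k j t))"
    unfolding fslice_twiddle tprod_def by (simp add: sum_distrib_right mult.assoc)
  also have "\<dots> = (\<Sum>s<m. \<Sum>t'<k. \<Sum>t<k. complex_of_real (A a s t') *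
      (complex_of_real (B s b ((t + k - t') mod k)) * twiddle k j t))"
    by (subst sum.swap) (rule sum.cong[OF refl], rule sum.swap)
  also have "\<dots> = (\<Sum>s<m. \<Sum>t'<k. complex_of_real (A a s t') * (twiddle k j t' * fslice k B j s b))"
    by (intro sum.cong refl) (simp add: sum_distrib_left[symmetric] fslice_shift[OF k])
  also have "\<dots> = mm m (fslice k A j) (fslice k B j) a b"
    unfolding mm_def fslice_twiddle by (simp add: sum_distrib_right mult.assoc)
  finally show ?thesis .
qed

lemma fslice_ttr_apply:
  assumes k: "0 < k"
  shows "fslice k (ttr k T) j a b = adj (fslice k T j) a b"
proof -
  have "fslice k (ttr k T) j a b = (\<Sum>t<k. complex_of_real (T b a ((k - t) mod k)) * twiddle k j t)"
    unfolding fslice_twiddle ttr_def by simp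
  also have "\<dots> = (\<Sum>t<k. complex_of_real (T b a ((k - t) mod k)) * twiddle k j ((k - (k - t) mod k) mod k))"
  proof (rule sum.cong[OF refl])
    fix t assume t: "t \<in> {..<k}"
    have "(k - (k - t) mod k) mod k = t" using t by (cases "t = 0") auto
    thus "complex_of_real (T b a ((k - t) mod k)) * twiddle k j t = complex_of_real (T b a ((k - t) mod k)) * twiddle k j ((k - (k - t) mod k) mod k)" by simp
  qed
  also have "\<dots> = (\<Sum>t<k. complex_of_real (T b a t) * twiddle k j ((k - t) mod k))"
    by (rule sum_reverse[of "\<lambda>u. complex_of_real (T b a u) * twiddle k j ((k - u) mod k)"])
  also have "\<dots> = (\<Sum>t<k. complex_of_real (T b a t) * cnj (twiddle k j t))"
    by (rule sum.cong[OF refl]) (simp add: twiddle_rev[OF k])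
  also have "\<dots> = adj (fslice k T j) a b"
    unfolding adj_def fslice_twiddle by simp
  finally show ?thesis .
qed

lemma fslice_tprod: "0 < k \<Longrightarrow> fslice k (tprod k m A B) j = mm m (fslice k A j) (fslice k B j)"
  by (intro ext fslice_tprod_apply)

lemma fslice_ttr: "0 < k \<Longrightarrow> fslice k (ttr k T) j = adj (fslice k T j)"
  by (intro ext fslice_ttr_apply)

lemma fslice_tadd: "fslice k (tadd A B) j a b = fslice k A j a b + fslice k B j a b"
  unfolding fslice_twiddle tadd_def by (simp add: distrib_right sum.distrib)

lemma fslice_tsub: "fslice k (tsub A B) j a b = fslice k A j a b - fslice k B j a b"
  unfolding fslice_twiddle tsub_def by (simp add: left_diff_distrib sum_subtractf)

lemma fslice_tscale: "fslice k (tscale c A) j a b = complex_of_real c * fslice k A j a b"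
  unfolding fslice_twiddle tscale_def by (simp add: sum_distrib_left mult.assoc)

lemma fslice_tid: "0 < k \<Longrightarrow> fslice k tid j a b = idm a b"
proof -
  assume "0 < k"
  have "fslice k tid j a b = (\<Sum>t<k. if t = 0 then idm a b * twiddle k j t else 0)"
    unfolding fslice_twiddle tid_def idm_def by (rule sum.cong) auto
  with \<open>0 < k\<close> show ?thesis by (simp add: twiddle_def)
qed

lemma fslice_teq: "teq p q k A B \<Longrightarrow> a < p \<Longrightarrow> b < q \<Longrightarrow> fslice k A j a b = fslice k B j a b"
  unfolding teq_def fslice_twiddle by simp

lemmas fslice_simps = fslice_tprod fslice_ttr fslice_tadd fslice_tsub fslice_tscale fslice_tid

lemma sum_blocks:
  fixes k q :: nat
  shows "(\<Sum>b<k*q. g b) = (\<Sum>m<k. \<Sum>i<q. g (m*q+i))"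
proof -
  have "(\<Sum>b<k*q. g b) = (\<Sum>m<k. sum g {m*q..<m*q+q})" by (rule sum.nat_group[symmetric])
  also have "\<dots> = (\<Sum>m<k. \<Sum>i<q. g (m*q+i))"
  proof (rule sum.cong[OF refl])
    fix m
    have "sum g {m*q..<m*q+q} = sum g {0 + m*q..<q + m*q}" by (simp add: add.commute)
    also have "\<dots> = (\<Sum>i=0..<q. g (i + m*q))" by (rule sum.shift_bounds_nat_ivl)
    finally show "sum g {m*q..<m*q+q} = (\<Sum>i<q. g (m*q+i))" by (simp add: atLeast0LessThan add.commute)
  qed
  finally show ?thesis .
qed

definition block_embed :: "nat \<Rightarrow> nat \<Rightarrow> cvec \<Rightarrow> cvec" where
  "block_embed q j x = (\<lambda>b. if b div q = j then x (b mod q) else 0)"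

lemma cvnorm_block_embed:
  assumes "j < k" "0 < q"
  shows "cvnorm (k*q) (block_embed q j x) = cvnorm q x"
proof -
  have "(cvnorm (k*q) (block_embed q j x))\<^sup>2 = (\<Sum>m<k. \<Sum>i<q. (cmod (block_embed q j x (m*q+i)))\<^sup>2)"
    unfolding cvnorm_power2 by (rule sum_blocks)
  also have "\<dots> = (\<Sum>m<k. if m = j then (\<Sum>i<q. (cmod (x i))\<^sup>2) else 0)"
    by (rule sum.cong[OF refl]) (auto simp: block_embed_def assms)
  also have "\<dots> = (cvnorm q x)\<^sup>2" using assms by (simp add: cvnorm_power2)
  finally show ?thesis by (simp add: power2_eq_iff_nonneg)
qed

lemma mv_bdiag_block_embed:
  assumes "j < k" "0 < q" "0 < p"
  shows "mv (k*q) (bdiag k p q M) (block_embed q j x) = block_embed p j (mv q (M j) x)"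
proof
  fix a
  have "mv (k*q) (bdiag k p q M) (block_embed q j x) a
      = (\<Sum>m<k. \<Sum>i<q. bdiag k p q M a (m*q+i) * block_embed q j x (m*q+i))"
    unfolding mv_def by (rule sum_blocks)
  also have "\<dots> = (\<Sum>m<k. if m = j then (\<Sum>i<q. (if a div p = j then M j (a mod p) i else 0) * x i) else 0)"
  proof (rule sum.cong[OF refl])
    fix m
    show "(\<Sum>i<q. bdiag k p q M a (m*q+i) * block_embed q j x (m*q+i)) =
      (if m = j then (\<Sum>i<q. (if a div p = j then M j (a mod p) i else 0) * x i) else 0)"
    proof (cases "m = j")
      case True
      show ?thesis unfolding True
        by (simp, rule sum.cong[OF refl]) (use assms in \<open>simp add: bdiag_def block_embed_def\<close>)
    qed (use assms in \<open>simp add: block_embed_def\<close>)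
  qed
  also have "\<dots> = block_embed p j (mv q (M j) x) a"
    using assms unfolding block_embed_def mv_def by auto
  finally show "mv (k*q) (bdiag k p q M) (block_embed q j x) a = block_embed p j (mv q (M j) x) a" .
qed

lemma bounded_by_fslice_tnorm:
  assumes "j < k" "0 < q" "0 < p"
  shows "bounded_by p q (fslice k T j) (tnorm k p q T)"
  unfolding bounded_by_def
proof
  fix x
  have "cvnorm p (mv q (fslice k T j) x) = cvnorm (k*p) (mv (k*q) (tbar k p q T) (block_embed q j x))"
    unfolding tbar_def mv_bdiag_block_embed[OF assms] cvnorm_block_embed[OF assms(1,3)] ..
  also have "\<dots> \<le> tnorm k p q T * cvnorm (k*q) (block_embed q j x)"
    unfolding tnorm_def using assms by (intro bounded_byD[OF bounded_by_specnorm]) simp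
  finally show "cvnorm p (mv q (fslice k T j) x) \<le> tnorm k p q T * cvnorm q x"
    unfolding cvnorm_block_embed[OF assms(1,2)] .
qed

text \<open>Test the max-min principle for \<open>tsigma_min\<close> against an arbitrary (square) isometry \<open>V\<close>,
  using a preimage of the embedded unit vector \<open>e\<close>.\<close>
lemma tsigma_min_le_fslice:
  assumes "j < k" "0 < r" "0 < n" "cvnorm r e = 1"
  shows "tsigma_min k n r X \<le> cvnorm n (mv r (fslice k X j) e)"
  unfolding tsigma_min_def
proof (rule sigma_leI)
  show "isometry (k * r) (r * k) idm" using isometry_idm[of "k*r"] by (simp add: mult.commute)
  fix V assume "isometry (k * r) (r * k) V"
  hence V: "isometry (k * r) (k * r) V" by (simp add: mult.commute)
  obtain y where y: "\<forall>a<k*r. mv (k*r) V y a = block_embed r j e a"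
    using isometry_square_surj[OF V] by blast
  have "cvnorm (k*r) y = 1"
    using cvnorm_isometry[OF V, of y] cvnorm_cong[of "k*r" "mv (k*r) V y" "block_embed r j e"] y
      cvnorm_block_embed[OF assms(1,2)] assms(4) by simp
  moreover have "mv (k * r) (tbar k n r X) (mv (r * k) V y) = mv (k * r) (tbar k n r X) (block_embed r j e)"
    by (rule mv_cong) (use y in \<open>simp add: mult.commute\<close>)
  hence "cvnorm (k * n) (mv (k * r) (tbar k n r X) (mv (r * k) V y)) = cvnorm n (mv r (fslice k X j) e)"
    unfolding tbar_def mv_bdiag_block_embed[OF assms(1,2,3)] by (simp add: cvnorm_block_embed[OF assms(1,3)])
  ultimately show "\<exists>y. cvnorm (r * k) y = 1 \<and>
      cvnorm (k * n) (mv (k * r) (tbar k n r X) (mv (r * k) V y)) \<le> cvnorm n (mv r (fslice k X j) e)"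
    by (auto simp: mult.commute)
qed

lemma tsigma_min_pos_imp_dim_pos:
  assumes "0 < k" "0 < r" "0 < tsigma_min k n r X"
  shows "0 < n"
proof (rule ccontr)
  assume "\<not> 0 < n"
  have "tsigma_min k n r X \<le> 0" unfolding tsigma_min_def
  proof (rule sigma_leI)
    show "isometry (k * r) (r * k) idm" using isometry_idm[of "k*r"] by (simp add: mult.commute)
    show "\<exists>y. cvnorm (r * k) y = 1 \<and> cvnorm (k * n) (mv (k * r) (tbar k n r X) (mv (r * k) V y)) \<le> 0" for V
      using cvnorm_basis0[of "r*k"] assms \<open>\<not> 0 < n\<close> by (intro exI[of _ basis0]) (simp add: cvnorm_def)
  qed
  thus False using assms(3) by simp
qed

lemma isometry_fslice:
  assumes "0 < k" and "teq p p k (tprod k q (ttr k A) A) tid"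
  shows "isometry q p (fslice k A j)"
  unfolding isometry_iff_mm
proof (intro allI impI)
  fix a b assume "a < p" "b < p"
  hence "fslice k (tprod k q (ttr k A) A) j a b = fslice k tid j a b" by (intro fslice_teq[OF assms(2)])
  thus "mm q (adj (fslice k A j)) (fslice k A j) a b = idm a b"
    using assms(1) by (simp add: fslice_simps)
qed

lemma tsvd_compact_fslice:
  assumes "0 < k" and "tsvd_compact p q k s T U S V"
  shows "isometry p s (fslice k U j)" "isometry q s (fslice k V j)"
    and "\<forall>a<p. \<forall>b<q. fslice k T j a b = mm s (fslice k U j) (mm s (fslice k S j) (adj (fslice k V j))) a b"
proof -
  show "isometry p s (fslice k U j)" "isometry q s (fslice k V j)"
    using assms unfolding tsvd_compact_def by (auto intro: isometry_fslice)
  have "teq p q k T (tprod k s (tprod k s U S) (ttr k V))"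
    using assms(2) unfolding tsvd_compact_def by blast
  thus "\<forall>a<p. \<forall>b<q. fslice k T j a b = mm s (fslice k U j) (mm s (fslice k S j) (adj (fslice k V j))) a b"
    using assms(1) by (auto dest: fslice_teq simp: fslice_simps mm_assoc)
qed

section \<open>A spectral lower bound through moments\<close>

text \<open>Read \<open>p\<^sub>i\<close> as the moments \<open>\<langle>y, (M\<^sup>*M)\<^sup>i y\<rangle>\<close> of a unit vector \<open>y\<close>, and the hypotheses as
  \<open>a \<le> M\<^sup>*M \<le> K\<close> on \<open>span {y, M\<^sup>*M y}\<close>. The conclusions are the facts
  \<open>\<lambda> - a \<ge> 0\<close>, \<open>(\<lambda> - a)\<^sup>3 \<ge> 0\<close> and \<open>(\<lambda> - a)\<^sup>2 \<le> K (\<lambda> - a)\<close> on the spectrum, integrated.\<close>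
lemma moments_about_lower_bound:
  fixes p1 p2 p3 a K :: real
  assumes lower: "\<And>\<alpha> \<beta>. a * (\<alpha>\<^sup>2 + 2*\<alpha>*\<beta>*p1 + \<beta>\<^sup>2*p2) \<le> \<alpha>\<^sup>2*p1 + 2*\<alpha>*\<beta>*p2 + \<beta>\<^sup>2*p3"
    and upper: "\<And>\<alpha> \<beta>. \<alpha>\<^sup>2*p1 + 2*\<alpha>*\<beta>*p2 + \<beta>\<^sup>2*p3 \<le> K * (\<alpha>\<^sup>2 + 2*\<alpha>*\<beta>*p1 + \<beta>\<^sup>2*p2)"
    and second: "0 \<le> p2 - 2*a*p1 + a\<^sup>2" and "0 \<le> a" and "0 < K"
  shows "0 \<le> p1 - a" and "0 \<le> p3 - 3*a*p2 + 3*a\<^sup>2*p1 - a^3"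
    and "p2 - 2*a*p1 + a\<^sup>2 \<le> K * (p1 - a)"
proof -
  define c1 where "c1 = p1 - a"
  define c2 where "c2 = p2 - 2*a*p1 + a\<^sup>2"
  define c3 where "c3 = p3 - 3*a*p2 + 3*a\<^sup>2*p1 - a^3"
  show "0 \<le> p1 - a" using lower[of 1 0] by simp
  have at_a: "0 \<le> c3 \<and> c3 \<le> (K - a) * c2"
    using lower[of "- a" 1] upper[of "- a" 1] unfolding c2_def c3_def
    by (simp add: power2_eq_square power3_eq_cube algebra_simps)
  thus "0 \<le> p3 - 3*a*p2 + 3*a\<^sup>2*p1 - a^3" unfolding c3_def by simp
  have c3_le: "c3 \<le> K * c2"
    using at_a second \<open>0 \<le> a\<close> unfolding c2_def by (smt (verit) mult_right_mono)
  define t where "t = 1 / K"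
  have "0 \<le> c1 - 2 * t * c2 + t\<^sup>2 * c3"
    using lower[of "1 + t * a" "- t"] unfolding c1_def c2_def c3_def
    by (simp add: power2_eq_square power3_eq_cube algebra_simps)
  also have "t\<^sup>2 * c3 \<le> t * c2"
    using mult_left_mono[OF c3_le, of "t\<^sup>2"] \<open>0 < K\<close> unfolding t_def by (simp add: power2_eq_square)
  finally show "p2 - 2*a*p1 + a\<^sup>2 \<le> K * (p1 - a)"
    unfolding t_def c1_def[symmetric] c2_def[symmetric] using \<open>0 < K\<close> by (simp add: field_simps)
qed

text \<open>In the moment picture this is \<open>\<integral> f \<ge> f a\<close> for \<open>f \<lambda> = \<lambda> (1 - \<mu> \<lambda>)\<^sup>2\<close>, expanded around \<open>a\<close>:
  \<open>f \<lambda> - f a = \<alpha> (\<lambda> - a) + \<beta> (\<lambda> - a)\<^sup>2 + \<mu>\<^sup>2 (\<lambda> - a)\<^sup>3\<close> with \<open>\<beta> \<le> 0\<close> and \<open>\<alpha> + \<beta> K \<ge> 0\<close>.\<close>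
lemma cubic_moment_bound:
  fixes p1 p2 p3 a K \<mu> :: real
  assumes c1: "0 \<le> p1 - a" and c3: "0 \<le> p3 - 3*a*p2 + 3*a\<^sup>2*p1 - a^3"
    and c21: "p2 - 2*a*p1 + a\<^sup>2 \<le> K * (p1 - a)"
    and "0 \<le> a" "a \<le> K" "0 \<le> \<mu>" "\<mu> * K \<le> 1/10"
  shows "a * (1 - \<mu> * a)\<^sup>2 \<le> p1 - 2 * \<mu> * p2 + \<mu>\<^sup>2 * p3"
proof -
  define \<alpha> where "\<alpha> = 1 - 4 * \<mu> * a + 3 * \<mu>\<^sup>2 * a\<^sup>2"
  define \<beta> where "\<beta> = - 2 * \<mu> + 3 * \<mu>\<^sup>2 * a"
  define c1 where "c1 = p1 - a"
  define c2 where "c2 = p2 - 2*a*p1 + a\<^sup>2"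
  define c3 where "c3 = p3 - 3*a*p2 + 3*a\<^sup>2*p1 - a^3"
  have taylor: "p1 - 2 * \<mu> * p2 + \<mu>\<^sup>2 * p3 - a * (1 - \<mu> * a)\<^sup>2 = \<alpha> * c1 + \<beta> * c2 + \<mu>\<^sup>2 * c3"
    unfolding \<alpha>_def \<beta>_def c1_def c2_def c3_def
    by (simp add: power2_eq_square power3_eq_cube algebra_simps)
  have \<mu>a: "\<mu> * a \<le> 1/10"
    using assms(5-7) by (meson mult_left_mono order_trans)
  have "3 * \<mu>\<^sup>2 * a \<le> 3 * \<mu> * (1/10)"
    using mult_left_mono[OF \<mu>a, of "3 * \<mu>"] \<open>0 \<le> \<mu>\<close> by (simp add: power2_eq_square)
  hence \<beta>: "\<beta> \<le> 0" unfolding \<beta>_def using \<open>0 \<le> \<mu>\<close> by linarith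
  have "\<beta> * K \<ge> - 2 * \<mu> * K"
    unfolding \<beta>_def using assms(4-6) by (simp add: algebra_simps)
  moreover have "\<alpha> \<ge> 1 - 4 * \<mu> * a" unfolding \<alpha>_def by simp
  ultimately have "0 \<le> \<alpha> + \<beta> * K" using \<mu>a assms(7) by linarith
  hence "0 \<le> \<alpha> * c1 + \<beta> * (K * c1)"
    using c1 unfolding c1_def[symmetric] by (metis distrib_right mult.assoc mult_nonneg_nonneg)
  moreover have "\<beta> * (K * c1) \<le> \<beta> * c2"
    unfolding c1_def c2_def by (rule mult_left_mono_neg[OF c21 \<beta>])
  moreover have "0 \<le> \<mu>\<^sup>2 * c3" using c3 unfolding c3_def by simp
  ultimately show ?thesis using taylor by linarith
qed

lemma gram_quadratic_form_bounds:
  assumes lower: "\<And>x. s * cvnorm r x \<le> cvnorm r (mv r M x)" and "0 \<le> s"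
    and upper: "bounded_by r r M L"
    and y: "cvnorm r y = 1"
  defines "N \<equiv> mv r (adj M) (mv r M y)"
    and "p1 \<equiv> (cvnorm r (mv r M y))\<^sup>2" and "p2 \<equiv> (cvnorm r (mv r (adj M) (mv r M y)))\<^sup>2"
    and "p3 \<equiv> (cvnorm r (mv r M (mv r (adj M) (mv r M y))))\<^sup>2"
  shows "s\<^sup>2 * (\<alpha>\<^sup>2 + 2*\<alpha>*\<beta>*p1 + \<beta>\<^sup>2*p2) \<le> \<alpha>\<^sup>2*p1 + 2*\<alpha>*\<beta>*p2 + \<beta>\<^sup>2*p3"
    and "\<alpha>\<^sup>2*p1 + 2*\<alpha>*\<beta>*p2 + \<beta>\<^sup>2*p3 \<le> L\<^sup>2 * (\<alpha>\<^sup>2 + 2*\<alpha>*\<beta>*p1 + \<beta>\<^sup>2*p2)"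
    and "(cvnorm r (\<lambda>b. complex_of_real \<alpha> * y b + complex_of_real \<beta> * N b))\<^sup>2
      = \<alpha>\<^sup>2 + 2*\<alpha>*\<beta>*p1 + \<beta>\<^sup>2*p2"
    and "(cvnorm r (mv r M (\<lambda>b. complex_of_real \<alpha> * y b + complex_of_real \<beta> * N b)))\<^sup>2
      = \<alpha>\<^sup>2*p1 + 2*\<alpha>*\<beta>*p2 + \<beta>\<^sup>2*p3"
proof -
  let ?x = "\<lambda>b. complex_of_real \<alpha> * y b + complex_of_real \<beta> * N b"
  have "Re (cinner r y N) = p1"
    unfolding N_def p1_def cinner_adj[of r y r "adj M", simplified] by (simp add: Re_cinner_self)
  thus x: "(cvnorm r ?x)\<^sup>2 = \<alpha>\<^sup>2 + 2*\<alpha>*\<beta>*p1 + \<beta>\<^sup>2*p2"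
    unfolding cvnorm_lincomb_power2 y p2_def N_def by simp
  have "cinner r (mv r M y) (mv r M N) = cinner r N N"
    unfolding cinner_adj by (simp add: N_def)
  hence "Re (cinner r (mv r M y) (mv r M N)) = p2"
    unfolding p2_def N_def by (simp add: Re_cinner_self)
  thus Mx: "(cvnorm r (mv r M ?x))\<^sup>2 = \<alpha>\<^sup>2*p1 + 2*\<alpha>*\<beta>*p2 + \<beta>\<^sup>2*p3"
    unfolding mv_add mv_scale cvnorm_lincomb_power2 p1_def p3_def N_def by simp
  have "(s * cvnorm r ?x)\<^sup>2 \<le> (cvnorm r (mv r M ?x))\<^sup>2"
    using lower[of ?x] \<open>0 \<le> s\<close> by (intro power_mono) auto
  thus "s\<^sup>2 * (\<alpha>\<^sup>2 + 2*\<alpha>*\<beta>*p1 + \<beta>\<^sup>2*p2) \<le> \<alpha>\<^sup>2*p1 + 2*\<alpha>*\<beta>*p2 + \<beta>\<^sup>2*p3"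
    unfolding power_mult_distrib Mx x .
  have "(cvnorm r (mv r M ?x))\<^sup>2 \<le> (L * cvnorm r ?x)\<^sup>2"
    using bounded_byD[OF upper, of ?x] by (intro power_mono) auto
  thus "\<alpha>\<^sup>2*p1 + 2*\<alpha>*\<beta>*p2 + \<beta>\<^sup>2*p3 \<le> L\<^sup>2 * (\<alpha>\<^sup>2 + 2*\<alpha>*\<beta>*p1 + \<beta>\<^sup>2*p2)"
    unfolding power_mult_distrib Mx x .
qed

lemma cvnorm_mv_I_minus_gram_ge:
  fixes M :: cmat and s L \<mu> :: real
  assumes lower: "\<And>x. s * cvnorm r x \<le> cvnorm r (mv r M x)"
    and upper: "bounded_by r r M L"
    and "0 \<le> s" "0 \<le> \<mu>" "\<mu> * L\<^sup>2 \<le> 1/10" "0 < L"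
    and y: "cvnorm r y = 1"
  shows "s * (1 - \<mu> * s\<^sup>2) \<le> cvnorm r (mv r M (\<lambda>b. y b - complex_of_real \<mu> * mv r (adj M) (mv r M y) b))"
proof -
  let ?N = "mv r (adj M) (mv r M y)"
  let ?p1 = "(cvnorm r (mv r M y))\<^sup>2" and ?p2 = "(cvnorm r ?N)\<^sup>2" and ?p3 = "(cvnorm r (mv r M ?N))\<^sup>2"
  define a where "a = s\<^sup>2"
  note quad = gram_quadratic_form_bounds[OF lower \<open>0 \<le> s\<close> upper y]
  have "0 \<le> (cvnorm r (\<lambda>b. complex_of_real (- a) * y b + complex_of_real 1 * ?N b))\<^sup>2" by simp
  hence second: "0 \<le> ?p2 - 2*a*?p1 + a\<^sup>2" unfolding quad(3) by simp
  have a: "0 \<le> a" "a \<le> L\<^sup>2"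
    using quad(1)[of 1 0] quad(2)[of 1 0] unfolding a_def by simp_all
  have "0 \<le> ?p1 - a" "0 \<le> ?p3 - 3*a*?p2 + 3*a\<^sup>2*?p1 - a^3" "?p2 - 2*a*?p1 + a\<^sup>2 \<le> L\<^sup>2 * (?p1 - a)"
    using moments_about_lower_bound[OF quad(1)[folded a_def] quad(2) second a(1)] \<open>0 < L\<close> by simp_all
  hence "a * (1 - \<mu> * a)\<^sup>2 \<le> ?p1 - 2 * \<mu> * ?p2 + \<mu>\<^sup>2 * ?p3"
    using a assms(4,5) by (intro cubic_moment_bound[where K = "L\<^sup>2"]) (simp_all add: mult.commute)
  also have "\<dots> = 1\<^sup>2*?p1 + 2*1*(- \<mu>)*?p2 + (- \<mu>)\<^sup>2*?p3" by simp
  also have "\<dots> = (cvnorm r (mv r M (\<lambda>b. complex_of_real 1 * y b + complex_of_real (- \<mu>) * ?N b)))\<^sup>2"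
    by (rule quad(4)[symmetric])
  also have "(\<lambda>b. complex_of_real 1 * y b + complex_of_real (- \<mu>) * ?N b) = (\<lambda>b. y b - complex_of_real \<mu> * ?N b)"
    by simp
  finally have "(s * (1 - \<mu> * s\<^sup>2))\<^sup>2 \<le> (cvnorm r (mv r M (\<lambda>b. y b - complex_of_real \<mu> * ?N b)))\<^sup>2"
    unfolding a_def by (simp add: power_mult_distrib)
  thus ?thesis by (rule power2_le_imp_le) simp
qed

section \<open>One Fourier slice of the gradient step\<close>

lemma proj_compl_apply:
  assumes P: "\<forall>a<n. \<forall>b<n. mm n' P (adj P) a b = idm a b - mm r V (adj V) a b" and a: "a < n"
  shows "v a = mv r V (mv n (adj V) v) a + mv n' P (mv n (adj P) v) a"
proof -
  have "mv n' P (mv n (adj P) v) a = mv n (\<lambda>a b. idm a b - mm r V (adj V) a b) v a"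
    unfolding mv_mm[symmetric] using P a by (intro mv_cong_mat) auto
  also have "\<dots> = mv n idm v a - mv n (mm r V (adj V)) v a"
    unfolding mv_def by (simp add: left_diff_distrib sum_subtractf)
  also have "\<dots> = v a - mv r V (mv n (adj V) v) a" using a by (simp add: mv_idm mv_mm)
  finally show ?thesis by simp
qed

lemma cvnorm_proj_compl_power2:
  assumes "\<forall>a<n. \<forall>b<n. mm n' P (adj P) a b = idm a b - mm r V (adj V) a b"
  shows "(cvnorm n v)\<^sup>2 = (cvnorm r (mv n (adj V) v))\<^sup>2 + (cvnorm n' (mv n (adj P) v))\<^sup>2"
proof -
  have "cinner n v v = cinner n v (\<lambda>a. mv r V (mv n (adj V) v) a + mv n' P (mv n (adj P) v) a)"
    by (rule cinner_cong) (auto intro: proj_compl_apply[OF assms])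
  also have "\<dots> = cinner r (mv n (adj V) v) (mv n (adj V) v) + cinner n' (mv n (adj P) v) (mv n (adj P) v)"
    unfolding cinner_def by (simp add: distrib_left sum.distrib cinner_adj[unfolded cinner_def])
  finally show ?thesis by (metis Re_cinner_self plus_complex.sel(1))
qed

text \<open>\<open>V\<close> and \<open>P\<close> span complementary subspaces, \<open>X = V B\<close> has singular values in \<open>[\<sigma>, L]\<close>,
  \<open>V\<^sup>* U = M\<^sub>t W\<^sup>*\<close> is the compact SVD (\<open>M\<^sub>t\<close> is the paper's \<open>V\<^sub>t \<Sigma>\<^sub>t\<close>), the columns of \<open>U W\<close> are
  \<open>\<delta>\<close>-close to the range of \<open>V\<close>, \<open>E\<close> is the restricted isometry error of \<open>\<A>\<^sup>*\<A>\<close>, and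
  \<open>G = (I + \<mu> (X X\<^sup>* - U U\<^sup>* + E)) U\<close> is the slice of \<open>U\<^sub>t\<^sub>+\<^sub>1\<close>.\<close>
locale gd_slice =
  fixes n r R n' :: nat and V X B P U W Mt E G :: cmat and \<mu> L \<sigma> \<delta> s :: real
  assumes r_pos: "0 < r"
    and V_isometry: "isometry n r V"
    and X_eq: "\<forall>a<n. \<forall>b<r. X a b = mm r V B a b"
    and X_ge: "\<And>e. \<sigma> * cvnorm r e \<le> cvnorm n (mv r X e)"
    and X_le: "bounded_by n r X L"
    and P_compl: "\<forall>a<n. \<forall>b<n. mm n' P (adj P) a b = idm a b - mm r V (adj V) a b"
    and W_isometry: "isometry R r W"
    and VU_eq: "\<forall>a<r. \<forall>b<R. mm n (adj V) U a b = mm r Mt (adj W) a b"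
    and PUW_le: "\<And>x. cvnorm n' (mv n (adj P) (mv R U (mv r W x))) \<le> \<delta> * cvnorm n (mv R U (mv r W x))"
    and U_le: "bounded_by n R U (3 * L)"
    and E_le: "bounded_by n n E (\<sigma>\<^sup>2 / 100)"
    and G_apply: "\<And>u a. a < n \<Longrightarrow> mv R G u a = mv R U u a + complex_of_real \<mu> *
        (mv r X (mv n (adj X) (mv R U u)) a - mv R U (mv n (adj U) (mv R U u)) a + mv n E (mv R U u) a)"
    and Mt_ge: "\<And>x. s * cvnorm r x \<le> cvnorm r (mv r Mt x)"
    and \<sigma>_pos: "0 < \<sigma>"
    and \<mu>_pos: "0 < \<mu>" and \<mu>_le: "\<mu> * L ^ 4 \<le> \<sigma>\<^sup>2 / 100"
    and \<delta>_nonneg: "0 \<le> \<delta>" and \<delta>_le: "\<delta> * L \<le> \<sigma> / 100"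
    and s_nonneg: "0 \<le> s"
begin

definition M :: cmat where
  "M = mm R (mm n (adj V) U) W"

lemma mv_M: "mv r M x = mv n (adj V) (mv R U (mv r W x))"
  unfolding M_def by (simp add: mv_mm)

lemma mv_adj_M: "mv r (adj M) z = mv R (adj W) (mv n (adj U) (mv r V z))"
  unfolding M_def by (simp add: adj_mm mv_mm)

lemma \<sigma>_le_L: "\<sigma> \<le> L"
  using X_ge[of basis0] bounded_byD[OF X_le, of basis0] cvnorm_basis0[OF r_pos] by simp

lemma L_pos: "0 < L"
  using \<sigma>_pos \<sigma>_le_L by linarith

lemma \<mu>_L2_le: "\<mu> * L\<^sup>2 \<le> 1/100"
proof -
  have "\<mu> * L\<^sup>2 * L\<^sup>2 \<le> \<sigma>\<^sup>2 / 100"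
    using \<mu>_le by (simp add: power2_eq_square power4_eq_xxxx ac_simps)
  also have "\<dots> \<le> 1/100 * L\<^sup>2"
    using \<sigma>_pos \<sigma>_le_L by (simp add: power_mono)
  finally show ?thesis using L_pos by simp
qed

lemma \<delta>_le_one_hundredth: "\<delta> \<le> 1/100"
proof -
  have "\<delta> * L \<le> 1/100 * L" using \<delta>_le \<sigma>_le_L by linarith
  thus ?thesis using L_pos by simp
qed

lemma bounded_by_M: "bounded_by r r M (3 * L)"
proof -
  have "bounded_by r R (mm n (adj V) U) (1 * (3 * L))"
    by (rule bounded_by_mm[OF bounded_by_adj_isometry[OF V_isometry] U_le]) simp
  hence "bounded_by r r M (1 * (3 * L) * 1)"
    unfolding M_def by (rule bounded_by_mm[OF _ bounded_by_isometry[OF W_isometry]]) (use L_pos in simp)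
  thus ?thesis by simp
qed

lemma bounded_by_adj_M: "bounded_by r r (adj M) (3 * L)"
  by (rule bounded_by_adj[OF bounded_by_M]) (use L_pos in simp)

lemma adj_V_U_apply_Mt: "a < r \<Longrightarrow> mv n (adj V) (mv R U u) a = mv r Mt (mv R (adj W) u) a"
  unfolding mv_mm[symmetric] using VU_eq by (intro mv_cong_mat) simp

lemma mv_M_eq_Mt: "a < r \<Longrightarrow> mv r M x a = mv r Mt x a"
proof -
  assume "a < r"
  hence "mv r M x a = mv r Mt (mv R (adj W) (mv r W x)) a"
    unfolding mv_M by (rule adj_V_U_apply_Mt)
  also have "mv r Mt (mv R (adj W) (mv r W x)) = mv r Mt x"
    by (rule mv_cong) (rule isometry_adj_mv[OF W_isometry])
  finally show ?thesis .
qed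

lemma M_ge: "s * cvnorm r x \<le> cvnorm r (mv r M x)"
proof -
  have "cvnorm r (mv r M x) = cvnorm r (mv r Mt x)" by (rule cvnorm_cong) (rule mv_M_eq_Mt)
  thus ?thesis using Mt_ge[of x] by simp
qed

lemma adj_V_U_apply: "a < r \<Longrightarrow> mv n (adj V) (mv R U u) a = mv r M (mv R (adj W) u) a"
  by (simp add: adj_V_U_apply_Mt mv_M_eq_Mt)

lemma X_apply: "a < n \<Longrightarrow> mv r X e a = mv r V (mv r B e) a"
  unfolding mv_mm[symmetric] using X_eq by (intro mv_cong_mat) simp

lemma adj_X_apply: "b < r \<Longrightarrow> mv n (adj X) u b = mv r (adj B) (mv n (adj V) u) b"
  unfolding mv_mm[symmetric] adj_mm[symmetric] using X_eq by (intro mv_cong_mat) (simp add: adj_def)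

lemma cvnorm_B: "cvnorm r (mv r B e) = cvnorm n (mv r X e)"
  unfolding cvnorm_isometry[OF V_isometry, symmetric] by (intro cvnorm_cong X_apply[symmetric])

lemma B_ge: "\<sigma> * cvnorm r e \<le> cvnorm r (mv r B e)"
  using X_ge by (simp add: cvnorm_B)

lemma bounded_by_B: "bounded_by r r B L"
  unfolding bounded_by_def cvnorm_B using bounded_byD[OF X_le] by simp

lemma adj_B_ge: "\<sigma> * cvnorm r z \<le> cvnorm r (mv r (adj B) z)"
  by (rule cvnorm_adj_ge[OF B_ge \<sigma>_pos])

lemma bounded_by_adj_B: "bounded_by r r (adj B) L"
  by (rule bounded_by_adj[OF bounded_by_B]) (use L_pos in simp)

lemma cvnorm_UW_le: "cvnorm n (mv R U (mv r W x)) \<le> 3 * L * cvnorm r x"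
  using bounded_byD[OF U_le, of "mv r W x"] cvnorm_isometry[OF W_isometry] by simp

lemma adj_V_X_adj_X_apply:
  assumes "b < r"
  shows "mv n (adj V) (mv r X (mv n (adj X) w)) b = mv r B (mv r (adj B) (mv n (adj V) w)) b"
proof -
  have "mv n (adj V) (mv r X (mv n (adj X) w)) b = mv n (adj V) (mv r V (mv r B (mv n (adj X) w))) b"
    by (rule arg_cong[where f = "\<lambda>f. f b"], rule mv_cong) (rule X_apply)
  also have "\<dots> = mv r B (mv n (adj X) w) b"
    by (rule isometry_adj_mv[OF V_isometry assms])
  also have "\<dots> = mv r B (mv r (adj B) (mv n (adj V) w)) b"
    by (rule arg_cong[where f = "\<lambda>f. f b"], rule mv_cong) (rule adj_X_apply)
  finally show ?thesis .
qed

end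

locale gd_slice_vec = gd_slice +
  fixes y :: cvec
  assumes y_unit: "cvnorm r y = 1"
begin

definition v :: cvec where "v = mv R U (mv r W y)"
definition z :: cvec where "z = mv n (adj V) v"
definition q :: cvec where "q = mv n (adj P) v"
definition m :: cvec where "m = mv r M (mv r (adj M) z)"
definition u :: cvec where "u = (\<lambda>b. z b - complex_of_real \<mu> * m b)"
definition leak :: cvec where "leak = mv R (adj W) (mv n (adj U) (mv n' P q))"
definition err :: cvec where
  "err = (\<lambda>b. complex_of_real (\<mu>\<^sup>2) * mv r B (mv r (adj B) m) b - complex_of_real \<mu> * mv r M leak b
            + complex_of_real \<mu> * mv n (adj V) (mv n E v) b)"

lemma z_eq: "z = mv r M y"
  unfolding z_def v_def mv_M ..

lemma s_le_cvnorm_z: "s \<le> cvnorm r z"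
  using M_ge[of y] y_unit unfolding z_eq by simp

lemma cvnorm_z_le: "cvnorm r z \<le> 3 * L"
  using bounded_byD[OF bounded_by_M, of y] y_unit unfolding z_eq by simp

lemma cvnorm_q_le: "cvnorm n' q \<le> \<delta> * cvnorm n v"
  unfolding q_def v_def by (rule PUW_le)

lemma cvnorm_v_le: "cvnorm n v \<le> 2 * cvnorm r z"
proof -
  have "cvnorm n' q \<le> 1/100 * cvnorm n v"
    using cvnorm_q_le mult_right_mono[OF \<delta>_le_one_hundredth cvnorm_nonneg] by (rule order.trans)
  hence "(cvnorm n' q)\<^sup>2 \<le> (1/100 * cvnorm n v)\<^sup>2" by (rule power_mono) simp
  moreover have "(1/100 * cvnorm n v)\<^sup>2 = 1/10000 * (cvnorm n v)\<^sup>2" by (simp add: power2_eq_square)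
  moreover have "(cvnorm n v)\<^sup>2 = (cvnorm r z)\<^sup>2 + (cvnorm n' q)\<^sup>2"
    unfolding z_def q_def by (rule cvnorm_proj_compl_power2[OF P_compl])
  moreover have "(2 * cvnorm r z)\<^sup>2 = 4 * (cvnorm r z)\<^sup>2" by (simp add: power2_eq_square)
  ultimately have "(cvnorm n v)\<^sup>2 \<le> (2 * cvnorm r z)\<^sup>2"
    using zero_le_power2[of "cvnorm r z"] by linarith
  thus ?thesis by (rule power2_le_imp_le) simp
qed

lemma adj_V_U_adj_U_apply:
  assumes "b < r"
  shows "mv n (adj V) (mv R U (mv n (adj U) v)) b = m b + mv r M leak b"
proof -
  have "mv n (adj U) v = mv n (adj U) (\<lambda>a. mv r V z a + mv n' P q a)"
    unfolding z_def q_def by (rule mv_cong) (rule proj_compl_apply[OF P_compl])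
  hence "mv R (adj W) (mv n (adj U) v) = (\<lambda>b. mv r (adj M) z b + leak b)"
    unfolding leak_def mv_adj_M by (simp add: mv_add)
  hence "mv r M (mv R (adj W) (mv n (adj U) v)) b = m b + mv r M leak b"
    unfolding m_def by (simp add: mv_add)
  thus ?thesis
    unfolding adj_V_U_apply[OF assms] .
qed

lemma step_apply:
  assumes "b < r"
  shows "mv n (adj V) (mv R G (mv r W y)) b = u b + complex_of_real \<mu> * mv r B (mv r (adj B) u) b + err b"
proof -
  let ?f = "mv r X (mv n (adj X) v)" and ?g = "mv R U (mv n (adj U) v)" and ?h = "mv n E v"
  have "mv n (adj V) (mv R G (mv r W y)) = mv n (adj V) (\<lambda>a. v a + complex_of_real \<mu> * (?f a - ?g a + ?h a))"
    unfolding v_def by (rule mv_cong) (rule G_apply)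
  hence "mv n (adj V) (mv R G (mv r W y)) b
      = z b + complex_of_real \<mu> * (mv n (adj V) ?f b - mv n (adj V) ?g b + mv n (adj V) ?h b)"
    unfolding z_def by (simp add: mv_add mv_scale mv_diff)
  moreover have "mv n (adj V) ?f b = mv r B (mv r (adj B) u) b + complex_of_real \<mu> * mv r B (mv r (adj B) m) b"
    unfolding adj_V_X_adj_X_apply[OF assms] z_def[symmetric] u_def by (simp add: mv_diff mv_scale)
  ultimately show ?thesis
    unfolding adj_V_U_adj_U_apply[OF assms] u_def err_def by (simp add: algebra_simps power2_eq_square)
qed

end

context gd_slice_vec
begin

lemma cvnorm_u_ge: "s * (1 - \<mu> * s\<^sup>2) \<le> cvnorm r u"
proof -
  have "s * (1 - \<mu> * s\<^sup>2) \<le> cvnorm r (mv r M (\<lambda>b. y b - complex_of_real \<mu> * mv r (adj M) (mv r M y) b))"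
  proof (rule cvnorm_mv_I_minus_gram_ge[OF _ bounded_by_M s_nonneg _ _ _ y_unit])
    show "s * cvnorm r x \<le> cvnorm r (mv r M x)" for x
      by (rule M_ge)
    show "\<mu> * (3 * L)\<^sup>2 \<le> 1/10" using \<mu>_L2_le by (simp add: power_mult_distrib)
  qed (use \<mu>_pos L_pos in auto)
  also have "mv r M (\<lambda>b. y b - complex_of_real \<mu> * mv r (adj M) (mv r M y) b) = u"
    unfolding u_def m_def z_eq by (simp add: mv_diff mv_scale)
  finally show ?thesis .
qed

lemma cvnorm_m_le: "cvnorm r m \<le> 9 * L\<^sup>2 * cvnorm r z"
proof -
  have "cvnorm r m \<le> 3 * L * cvnorm r (mv r (adj M) z)"
    unfolding m_def by (rule bounded_byD[OF bounded_by_M])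
  also have "\<dots> \<le> 3 * L * (3 * L * cvnorm r z)"
    using L_pos by (intro mult_left_mono bounded_byD[OF bounded_by_adj_M]) auto
  finally show ?thesis by (simp add: power2_eq_square)
qed

lemma cvnorm_u_ge_z: "(1 - 9 * \<mu> * L\<^sup>2) * cvnorm r z \<le> cvnorm r u"
proof -
  have "cvnorm r z - cvnorm r (\<lambda>b. - complex_of_real \<mu> * m b) \<le> cvnorm r u"
    using cvnorm_add_ge[of r z "\<lambda>b. - complex_of_real \<mu> * m b"] unfolding u_def by simp
  moreover have "cvnorm r (\<lambda>b. - complex_of_real \<mu> * m b) \<le> \<mu> * (9 * L\<^sup>2 * cvnorm r z)"
    unfolding cvnorm_scale using \<mu>_pos cvnorm_m_le by (simp add: mult_left_mono)
  ultimately show ?thesis by (simp add: algebra_simps)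
qed

text \<open>\<open>\<langle>u, (I + \<mu> B B\<^sup>*) u\<rangle> = |u|\<^sup>2 + \<mu> |B\<^sup>* u|\<^sup>2 \<ge> (1 + \<mu> \<sigma>\<^sup>2) |u|\<^sup>2\<close>.\<close>
lemma cvnorm_main_term_ge:
  "(1 + \<mu> * \<sigma>\<^sup>2) * cvnorm r u \<le> cvnorm r (\<lambda>b. u b + complex_of_real \<mu> * mv r B (mv r (adj B) u) b)"
proof (rule cvnorm_ge_of_Re_cinner)
  have "cinner r u (\<lambda>b. u b + complex_of_real \<mu> * mv r B (mv r (adj B) u) b)
      = cinner r u u + complex_of_real \<mu> * cinner r u (mv r B (mv r (adj B) u))"
    unfolding cinner_def by (simp add: distrib_left sum.distrib sum_distrib_left ac_simps)
  also have "cinner r u (mv r B (mv r (adj B) u)) = cinner r (mv r (adj B) u) (mv r (adj B) u)"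
    by (simp add: cinner_adj)
  finally have "Re (cinner r u (\<lambda>b. u b + complex_of_real \<mu> * mv r B (mv r (adj B) u) b))
      = (cvnorm r u)\<^sup>2 + \<mu> * (cvnorm r (mv r (adj B) u))\<^sup>2"
    by (simp add: cinner_self)
  moreover have "(\<sigma> * cvnorm r u)\<^sup>2 \<le> (cvnorm r (mv r (adj B) u))\<^sup>2"
    using adj_B_ge[of u] \<sigma>_pos by (intro power_mono) auto
  ultimately show "(1 + \<mu> * \<sigma>\<^sup>2) * (cvnorm r u)\<^sup>2
      \<le> Re (cinner r u (\<lambda>b. u b + complex_of_real \<mu> * mv r B (mv r (adj B) u) b))"
    using \<mu>_pos by (simp add: algebra_simps power_mult_distrib mult_left_mono)
qed

lemma cvnorm_leak_le: "cvnorm r leak \<le> 3 * L * \<delta> * cvnorm n' q"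
  unfolding leak_def
proof (rule cvnorm_adjoint_le[where T = "\<lambda>x. mv n (adj P) (mv R U (mv r W x))"])
  show "cvnorm n' (mv n (adj P) (mv R U (mv r W x))) \<le> 3 * L * \<delta> * cvnorm r x" for x
    using order.trans[OF PUW_le mult_left_mono[OF cvnorm_UW_le \<delta>_nonneg]] by (simp add: ac_simps)
  show "cinner r x (mv R (adj W) (mv n (adj U) (mv n' P q'))) = cinner n' (mv n (adj P) (mv R U (mv r W x))) q'"
    for x q' by (simp add: cinner_adj)
  show "0 \<le> 3 * L * \<delta>" using L_pos \<delta>_nonneg by simp
qed

lemma cvnorm_B_adj_B_m_le: "cvnorm r (mv r B (mv r (adj B) m)) \<le> 9 * L ^ 4 * cvnorm r z"
proof -
  have "cvnorm r (mv r B (mv r (adj B) m)) \<le> L * cvnorm r (mv r (adj B) m)"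
    by (rule bounded_byD[OF bounded_by_B])
  also have "\<dots> \<le> L * (L * cvnorm r m)"
    using L_pos by (intro mult_left_mono bounded_byD[OF bounded_by_adj_B]) auto
  also have "\<dots> \<le> L * (L * (9 * L\<^sup>2 * cvnorm r z))"
    using L_pos cvnorm_m_le by (intro mult_left_mono) auto
  finally show ?thesis by (simp add: power2_eq_square power4_eq_xxxx ac_simps)
qed

lemma cvnorm_M_leak_le: "cvnorm r (mv r M leak) \<le> 18 * (\<delta> * L)\<^sup>2 * cvnorm r z"
proof -
  have "cvnorm r (mv r M leak) \<le> 3 * L * cvnorm r leak" by (rule bounded_byD[OF bounded_by_M])
  also have "\<dots> \<le> 3 * L * (3 * L * \<delta> * cvnorm n' q)"
    using L_pos cvnorm_leak_le by (intro mult_left_mono) auto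
  also have "\<dots> \<le> 3 * L * (3 * L * \<delta> * (\<delta> * cvnorm n v))"
    using L_pos \<delta>_nonneg cvnorm_q_le by (intro mult_left_mono) auto
  also have "\<dots> \<le> 3 * L * (3 * L * \<delta> * (\<delta> * (2 * cvnorm r z)))"
    using L_pos \<delta>_nonneg cvnorm_v_le by (intro mult_left_mono) auto
  finally show ?thesis by (simp add: power2_eq_square ac_simps)
qed

lemma cvnorm_adj_V_E_v_le: "cvnorm r (mv n (adj V) (mv n E v)) \<le> \<sigma>\<^sup>2 / 50 * cvnorm r z"
proof -
  have "cvnorm r (mv n (adj V) (mv n E v)) \<le> 1 * cvnorm n (mv n E v)"
    by (rule bounded_byD[OF bounded_by_adj_isometry[OF V_isometry]])
  also have "\<dots> \<le> \<sigma>\<^sup>2 / 100 * cvnorm n v"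
    using bounded_byD[OF E_le] by simp
  also have "\<dots> \<le> \<sigma>\<^sup>2 / 100 * (2 * cvnorm r z)"
    using cvnorm_v_le by (intro mult_left_mono) auto
  finally show ?thesis by (simp add: mult.commute)
qed

lemma cvnorm_err_le: "cvnorm r err \<le> 12/100 * (\<mu> * \<sigma>\<^sup>2) * cvnorm r z"
proof -
  define Z where "Z = cvnorm r z"
  have Z: "0 \<le> Z" unfolding Z_def by simp
  have "cvnorm r err \<le> cvnorm r (\<lambda>b. complex_of_real (\<mu>\<^sup>2) * mv r B (mv r (adj B) m) b
        - complex_of_real \<mu> * mv r M leak b) + cvnorm r (\<lambda>b. complex_of_real \<mu> * mv n (adj V) (mv n E v) b)"
    unfolding err_def by (rule cvnorm_add_le)
  also have "\<dots> \<le> \<mu>\<^sup>2 * cvnorm r (mv r B (mv r (adj B) m)) + \<mu> * cvnorm r (mv r M leak)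
      + \<mu> * cvnorm r (mv n (adj V) (mv n E v))"
    using cvnorm_diff_le[of r "\<lambda>b. complex_of_real (\<mu>\<^sup>2) * mv r B (mv r (adj B) m) b"
        "\<lambda>b. complex_of_real \<mu> * mv r M leak b"] \<mu>_pos
    unfolding cvnorm_scale by (simp add: norm_power)
  also have "\<dots> \<le> \<mu>\<^sup>2 * (9 * L ^ 4 * Z) + \<mu> * (18 * (\<delta> * L)\<^sup>2 * Z) + \<mu> * (\<sigma>\<^sup>2 / 50 * Z)"
    using cvnorm_B_adj_B_m_le cvnorm_M_leak_le cvnorm_adj_V_E_v_le \<mu>_pos unfolding Z_def
    by (intro add_mono mult_left_mono) auto
  also have "\<dots> \<le> \<mu> * (9 * (\<sigma>\<^sup>2 / 100) * Z) + \<mu> * (18 * (\<sigma> / 100)\<^sup>2 * Z) + \<mu> * (\<sigma>\<^sup>2 / 50 * Z)"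
  proof -
    have "\<mu>\<^sup>2 * (9 * L ^ 4 * Z) = \<mu> * (9 * (\<mu> * L ^ 4) * Z)" by (simp add: power2_eq_square)
    also have "\<dots> \<le> \<mu> * (9 * (\<sigma>\<^sup>2 / 100) * Z)"
      using \<mu>_le \<mu>_pos Z by (intro mult_left_mono mult_right_mono) auto
    finally have "\<mu>\<^sup>2 * (9 * L ^ 4 * Z) \<le> \<mu> * (9 * (\<sigma>\<^sup>2 / 100) * Z)" .
    moreover have "(\<delta> * L)\<^sup>2 \<le> (\<sigma> / 100)\<^sup>2"
      using \<delta>_le \<delta>_nonneg L_pos by (intro power_mono) auto
    hence "\<mu> * (18 * (\<delta> * L)\<^sup>2 * Z) \<le> \<mu> * (18 * (\<sigma> / 100)\<^sup>2 * Z)"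
      using \<mu>_pos Z by (intro mult_left_mono mult_right_mono) auto
    ultimately show ?thesis by linarith
  qed
  also have "\<dots> \<le> 12/100 * (\<mu> * \<sigma>\<^sup>2) * Z"
    using \<mu>_pos Z by (simp add: power_divide algebra_simps)
  finally show ?thesis unfolding Z_def .
qed

lemma cvnorm_step_ge_main_minus_err:
  "(1 + \<mu> * \<sigma>\<^sup>2) * cvnorm r u - 12/100 * (\<mu> * \<sigma>\<^sup>2) * cvnorm r z
     \<le> cvnorm r (mv n (adj V) (mv R G (mv r W y)))"
proof -
  have "cvnorm r (mv n (adj V) (mv R G (mv r W y)))
      = cvnorm r (\<lambda>b. (u b + complex_of_real \<mu> * mv r B (mv r (adj B) u) b) + err b)"
    by (rule cvnorm_cong) (simp add: step_apply)
  thus ?thesis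
    using cvnorm_add_ge[of r "\<lambda>b. u b + complex_of_real \<mu> * mv r B (mv r (adj B) u) b" err]
      cvnorm_main_term_ge cvnorm_err_le by linarith
qed

text \<open>The error term \<open>0.12 \<mu> \<sigma>\<^sup>2 |z|\<close> is absorbed by the sharp bound on \<open>|u|\<close> when
  \<open>|z| \<le> 25 s / 6\<close>, and by the crude one otherwise.\<close>
lemma cvnorm_step_apply_ge: "s * (1 + 1/4 * \<mu> * \<sigma>\<^sup>2 - \<mu> * s\<^sup>2) \<le> cvnorm r (mv n (adj V) (mv R G (mv r W y)))"
proof -
  define S where "S = \<mu> * \<sigma>\<^sup>2"
  define T where "T = \<mu> * s\<^sup>2"
  define Z where "Z = cvnorm r z"
  have "\<mu> * \<sigma>\<^sup>2 \<le> \<mu> * L\<^sup>2"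
    using \<sigma>_pos \<sigma>_le_L \<mu>_pos by (intro mult_left_mono power_mono) auto
  hence S: "0 \<le> S" "S \<le> 1/100"
    using \<mu>_pos \<mu>_L2_le unfolding S_def by (simp, linarith)
  have T: "0 \<le> T" "T \<le> 9/100"
  proof -
    have "s\<^sup>2 \<le> (3 * L)\<^sup>2"
      using s_le_cvnorm_z cvnorm_z_le s_nonneg by (intro power_mono) auto
    hence "\<mu> * s\<^sup>2 \<le> \<mu> * (9 * L\<^sup>2)"
      using \<mu>_pos by (intro mult_left_mono) (auto simp: power_mult_distrib)
    thus "T \<le> 9/100" unfolding T_def using \<mu>_L2_le by linarith
  qed (use \<mu>_pos in \<open>simp add: T_def\<close>)
  have Z: "0 \<le> Z" unfolding Z_def by simp
  have w: "(1 + S) * cvnorm r u - 12/100 * (S * Z) \<le> cvnorm r (mv n (adj V) (mv R G (mv r W y)))"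
    using cvnorm_step_ge_main_minus_err unfolding S_def Z_def by (simp add: mult.assoc)
  have "s * (1 + 1/4 * S - T) \<le> cvnorm r (mv n (adj V) (mv R G (mv r W y)))"
  proof (cases "6 * Z \<le> 25 * s")
    case True
    have "(1 + S) * (s * (1 - T)) \<le> (1 + S) * cvnorm r u"
      using cvnorm_u_ge S unfolding T_def by (intro mult_left_mono) auto
    moreover have "S * Z \<le> S * (25/6 * s)" using True S by (intro mult_left_mono) auto
    moreover have "S * (25/6 * s) = 25/6 * (S * s)" by simp
    moreover have "0 \<le> s * S * (1/4 - T)" using s_nonneg S T by simp
    moreover have "(1 + S) * (s * (1 - T)) - 1/2 * (S * s) - s * (1 + 1/4 * S - T) = s * S * (1/4 - T)"
      by (simp add: algebra_simps)
    ultimately show ?thesis using w by linarith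
  next
    case False
    have "Z - 9 * \<mu> * L\<^sup>2 * Z \<le> cvnorm r u"
      using cvnorm_u_ge_z unfolding Z_def by (simp add: algebra_simps)
    moreover have "\<mu> * L\<^sup>2 * Z \<le> 1/100 * Z" by (rule mult_right_mono[OF \<mu>_L2_le Z])
    hence "9 * \<mu> * L\<^sup>2 * Z \<le> 9/100 * Z" by (simp add: ac_simps)
    moreover have "S * Z \<le> 1/100 * Z" using S Z by (intro mult_right_mono) auto
    moreover have "(1 + S) * cvnorm r u = cvnorm r u + S * cvnorm r u" by (simp add: algebra_simps)
    moreover have "0 \<le> S * cvnorm r u" using S by simp
    moreover have "s * (1 + 1/4 * S - T) \<le> s * (1 + 1/4 * (1/100))"
      using S T s_nonneg by (intro mult_left_mono) auto
    moreover have "s * (1 + 1/4 * (1/100)) = 401/400 * s" by simp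
    ultimately show ?thesis using w False s_nonneg by linarith
  qed
  thus ?thesis unfolding S_def T_def by (simp add: algebra_simps)
qed

end

lemma (in gd_slice) cvnorm_step_ge:
  assumes "cvnorm r y = 1"
  shows "s * (1 + 1/4 * \<mu> * \<sigma>\<^sup>2 - \<mu> * s\<^sup>2) \<le> cvnorm r (mv n (adj V) (mv R G (mv r W y)))"
proof -
  interpret gd_slice_vec n r R n' V X B P U W Mt E G \<mu> L \<sigma> \<delta> s y
    by unfold_locales (rule assms)
  show ?thesis by (rule cvnorm_step_apply_ge)
qed

section \<open>From tensors to Fourier slices\<close>

lemma bounded_by_fslice:
  assumes "j < k" and "tnorm k p q T \<le> K" and "0 \<le> K"
  shows "bounded_by p q (fslice k T j) K"
proof (cases "p = 0 \<or> q = 0")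
  case True
  hence "cvnorm p (mv q (fslice k T j) x) = 0" for x
    unfolding cvnorm_def mv_def by auto
  thus ?thesis unfolding bounded_by_def using assms(3) by simp
next
  case False
  thus ?thesis
    using bounded_by_mono[OF bounded_by_fslice_tnorm[OF assms(1)] assms(2)] by simp
qed

lemma cvnorm_adj_mv_le_of_range:
  assumes Y: "isometry n s Y" and C: "\<forall>a<n. \<forall>b<r. C a b = mm s Y Q a b"
    and PY: "bounded_by n' s (mm n (adj P) Y) \<delta>"
  shows "cvnorm n' (mv n (adj P) (mv r C x)) \<le> \<delta> * cvnorm n (mv r C x)"
proof -
  have Cx: "mv r C x a = mv s Y (mv r Q x) a" if "a < n" for a
    unfolding mv_mm[symmetric] using C that by (intro mv_cong_mat) simp
  have "cvnorm n (mv r C x) = cvnorm s (mv r Q x)"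
    using cvnorm_isometry[OF Y] cvnorm_cong[OF Cx] by simp
  moreover have "mv n (adj P) (mv r C x) = mv s (mm n (adj P) Y) (mv r Q x)"
    unfolding mv_mm using Cx by (intro mv_cong) simp
  ultimately show ?thesis using bounded_byD[OF PY] by simp
qed

lemma fslice_colsub_proj_le:
  assumes k: "0 < k" and j: "j < k" and Vuw: "colsub n r k s (tprod k R U W) Vuw"
    and P: "tnorm k n' s (tprod k n (ttr k P) Vuw) \<le> \<delta>" and "0 \<le> \<delta>"
  shows "cvnorm n' (mv n (adj (fslice k P j)) (mv R (fslice k U j) (mv r (fslice k W j) x)))
    \<le> \<delta> * cvnorm n (mv R (fslice k U j) (mv r (fslice k W j) x))"
proof -
  obtain SY ZY where "tsvd_compact n r k s (tprod k R U W) Vuw SY ZY"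
    using Vuw unfolding colsub_def by blast
  note UW_slice = tsvd_compact_fslice[OF k this, of j]
  have PY: "bounded_by n' s (mm n (adj (fslice k P j)) (fslice k Vuw j)) \<delta>"
    using bounded_by_fslice[OF j P \<open>0 \<le> \<delta>\<close>] k by (simp add: fslice_tprod fslice_ttr)
  have "\<forall>a<n. \<forall>b<r. mm R (fslice k U j) (fslice k W j) a b
      = mm s (fslice k Vuw j) (mm s (fslice k SY j) (adj (fslice k ZY j))) a b"
    using UW_slice(3) k by (simp add: fslice_tprod)
  from cvnorm_adj_mv_le_of_range[OF UW_slice(1) this PY] show ?thesis
    by (simp add: mv_mm)
qed

lemma mv_fslice_gd_step:
  fixes X U :: tensor and r R :: nat
  assumes "0 < k" and "a < n"
  defines "D \<equiv> tsub (tprod k r X (ttr k X)) (tprod k R U (ttr k U))"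
  shows "mv R (fslice k (gd_step n r R k m As \<mu> X U) j) u a
    = mv R (fslice k U j) u a + complex_of_real \<mu> *
      (mv r (fslice k X j) (mv n (adj (fslice k X j)) (mv R (fslice k U j) u)) a
       - mv R (fslice k U j) (mv n (adj (fslice k U j)) (mv R (fslice k U j) u)) a
       + mv n (fslice k (tsub (AstarA n k m As D) D) j) (mv R (fslice k U j) u) a)"
proof -
  let ?w = "mv R (fslice k U j) u"
  have "mv R (fslice k (gd_step n r R k m As \<mu> X U) j) u a
      = mv n (fslice k (tadd tid (tscale \<mu> (AstarA n k m As D))) j) ?w a"
    unfolding gd_step_def D_def using assms(1) by (simp add: fslice_simps mv_mm)
  also have "\<dots> = mv n idm ?w a + complex_of_real \<mu> * mv n (fslice k (AstarA n k m As D) j) ?w a"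
    using assms(1) unfolding mv_def
    by (simp add: fslice_tadd fslice_tscale fslice_tid distrib_right sum.distrib sum_distrib_left mult.assoc)
  also have "mv n (fslice k (AstarA n k m As D) j) ?w a
      = mv n (mm r (fslice k X j) (adj (fslice k X j))) ?w a
        - mv n (mm R (fslice k U j) (adj (fslice k U j))) ?w a
        + mv n (fslice k (tsub (AstarA n k m As D) D) j) ?w a"
    using assms(1) unfolding mv_def D_def
    by (simp add: fslice_simps distrib_right sum.distrib left_diff_distrib sum_subtractf)
  finally show ?thesis using assms(2) by (simp add: mv_idm mv_mm)
qed

lemma step_size_le:
  fixes \<mu> L \<sigma> :: real
  assumes L: "0 < L" and \<sigma>: "0 < \<sigma>" and \<mu>: "\<mu> \<le> c * L powr (-2) * (L / \<sigma>) powr (-2)"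
  shows "\<mu> * L ^ 4 \<le> c * \<sigma>\<^sup>2"
proof -
  have "x powr (-2) = 1 / x\<^sup>2" if "0 < x" for x :: real
    using that by (simp add: powr_minus powr_numeral divide_inverse)
  hence "\<mu> \<le> c * (1 / L\<^sup>2) * (1 / (L / \<sigma>)\<^sup>2)" using \<mu> L \<sigma> by simp
  also have "\<dots> = c * \<sigma>\<^sup>2 / L ^ 4"
    using L \<sigma> by (simp add: field_simps power2_eq_square power4_eq_xxxx)
  finally show ?thesis using L by (simp add: field_simps)
qed

lemma fslice_gd_slice:
  fixes n r R k m s j :: nat and As :: "nat \<Rightarrow> tensor" and X U VX VXp W Vuw Vt St :: tensor
  defines "D \<equiv> tsub (tprod k r X (ttr k X)) (tprod k R U (ttr k U))"
  assumes k: "0 < k" and r: "0 < r" and \<mu>: "0 < \<mu>"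
    and \<sigma>: "0 < tsigma_min k n r X"
    and VX: "colsub n r k r X VX"
    and VXp: "teq n n k (tprod k (n - r) VXp (ttr k VXp)) (tsub tid (tprod k r VX (ttr k VX)))"
    and W: "tsvd_compact r R k r (tprod k n (ttr k VX) U) Vt St W"
    and Vuw: "colsub n r k s (tprod k R U W) Vuw"
    and h\<mu>: "\<mu> \<le> 1/100 * (tnorm k n r X) powr (-2) * (kappa k n r X) powr (-2)"
    and hU: "tnorm k n R U \<le> 3 * tnorm k n r X"
    and hV: "tnorm k (n - r) s (tprod k n (ttr k VXp) Vuw) \<le> 1/100 * (kappa k n r X) powr (-1)"
    and hE: "tnorm k n n (tsub (AstarA n k m As D) D) \<le> 1/100 * (tsigma_min k n r X)\<^sup>2"
    and j: "j < k"
  obtains B Mt where "gd_slice n r R (n - r) (fslice k VX j) (fslice k X j) B (fslice k VXp j)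
    (fslice k U j) (fslice k W j) Mt (fslice k (tsub (AstarA n k m As D) D) j)
    (fslice k (gd_step n r R k m As \<mu> X U) j) \<mu> (tnorm k n r X) (tsigma_min k n r X)
    (tsigma_min k n r X / tnorm k n r X / 100) (sigma_min (fslice k (tprod k n (ttr k VX) U) j) r R)"
proof -
  define L where "L = tnorm k n r X"
  define \<sigma> where "\<sigma> = tsigma_min k n r X"
  have n: "0 < n" using tsigma_min_pos_imp_dim_pos[OF k r \<sigma>] .
  obtain SX ZX where X_svd: "tsvd_compact n r k r X VX SX ZX" using VX unfolding colsub_def by blast
  note X_slice = tsvd_compact_fslice[OF k X_svd, of j]
  note VU_slice = tsvd_compact_fslice[OF k W, of j]
  have rR: "r \<le> R" by (rule isometry_dim_le[OF VU_slice(2)])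
  have X_ge: "\<sigma> * cvnorm r e \<le> cvnorm n (mv r (fslice k X j) e)" for e
    unfolding \<sigma>_def by (rule cvnorm_mv_ge_of_unit) (rule tsigma_min_le_fslice[OF j r n])
  have X_le: "bounded_by n r (fslice k X j) L"
    unfolding L_def using j r n by (intro bounded_by_fslice_tnorm)
  have \<sigma>L: "\<sigma> \<le> L"
    using X_ge[of basis0] bounded_byD[OF X_le, of basis0] cvnorm_basis0[OF r] by simp
  hence L: "0 < L" using \<sigma> unfolding \<sigma>_def by linarith
  have \<kappa>: "kappa k n r X = L / \<sigma>" unfolding kappa_def L_def \<sigma>_def ..
  have \<delta>: "0 \<le> \<sigma> / L / 100" using L \<sigma> unfolding \<sigma>_def by simp
  show thesis
  proof (rule that, fold L_def \<sigma>_def, unfold_locales)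
    show "\<forall>a<n. \<forall>b<r. fslice k X j a b
        = mm r (fslice k VX j) (mm r (fslice k SX j) (adj (fslice k ZX j))) a b"
      by (rule X_slice(3))
    show "\<forall>a<n. \<forall>b<n. mm (n - r) (fslice k VXp j) (adj (fslice k VXp j)) a b
        = idm a b - mm r (fslice k VX j) (adj (fslice k VX j)) a b"
      using fslice_teq[OF VXp] k by (simp add: fslice_simps)
    show "\<forall>a<r. \<forall>b<R. mm n (adj (fslice k VX j)) (fslice k U j) a b
        = mm r (mm r (fslice k Vt j) (fslice k St j)) (adj (fslice k W j)) a b"
      using VU_slice(3) k by (simp add: fslice_simps mm_assoc)
    have "(L / \<sigma>) powr (-1) = \<sigma> / L"
      using L \<sigma> unfolding \<sigma>_def by (simp add: powr_minus_divide)
    hence "tnorm k (n - r) s (tprod k n (ttr k VXp) Vuw) \<le> \<sigma> / L / 100"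
      using hV unfolding \<kappa> by simp
    from fslice_colsub_proj_le[OF k j Vuw this \<delta>]
    show "cvnorm (n - r) (mv n (adj (fslice k VXp j)) (mv R (fslice k U j) (mv r (fslice k W j) x)))
        \<le> \<sigma> / L / 100 * cvnorm n (mv R (fslice k U j) (mv r (fslice k W j) x))" for x .
    show "bounded_by n R (fslice k U j) (3 * L)"
      using bounded_by_fslice[OF j hU] L unfolding L_def by simp
    show "bounded_by n n (fslice k (tsub (AstarA n k m As D) D) j) (\<sigma>\<^sup>2 / 100)"
      using bounded_by_fslice[OF j hE] unfolding \<sigma>_def by simp
    show "mv R (fslice k (gd_step n r R k m As \<mu> X U) j) u a
        = mv R (fslice k U j) u a + complex_of_real \<mu> *
          (mv r (fslice k X j) (mv n (adj (fslice k X j)) (mv R (fslice k U j) u)) a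
           - mv R (fslice k U j) (mv n (adj (fslice k U j)) (mv R (fslice k U j) u)) a
           + mv n (fslice k (tsub (AstarA n k m As D) D) j) (mv R (fslice k U j) u) a)" if "a < n" for u a
      unfolding D_def by (rule mv_fslice_gd_step[OF k that])
    have "\<forall>a<r. \<forall>b<R. fslice k (tprod k n (ttr k VX) U) j a b
        = mm r (mm r (fslice k Vt j) (fslice k St j)) (adj (fslice k W j)) a b"
      using VU_slice(3) by (simp add: mm_assoc)
    thus "sigma_min (fslice k (tprod k n (ttr k VX) U) j) r R * cvnorm r x
        \<le> cvnorm r (mv r (mm r (fslice k Vt j) (fslice k St j)) x)" for x
      unfolding sigma_min_def using rR by (simp add: min_def sigma_mult_cvnorm_le_factor[OF VU_slice(2)])
    show "\<mu> * L ^ 4 \<le> \<sigma>\<^sup>2 / 100"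
      using step_size_le[OF L \<sigma>[folded \<sigma>_def] h\<mu>[folded L_def, unfolded \<kappa>]] by simp
    show "\<sigma> / L / 100 * L \<le> \<sigma> / 100"
      using L by simp
    show "0 \<le> sigma_min (fslice k (tprod k n (ttr k VX) U) j) r R"
      unfolding sigma_min_def using rR r VU_slice(2) by (simp add: min_def sigma_nonneg)
  qed (use X_slice VU_slice r \<mu> \<sigma> L X_ge X_le \<delta> in \<open>simp_all add: L_def \<sigma>_def\<close>)
qed

lemma fslice_sigma_min_growth:
  fixes n r R k m s j :: nat and As :: "nat \<Rightarrow> tensor" and X U VX VXp W Vuw Vt St :: tensor
    and \<mu> :: real
  defines "D \<equiv> tsub (tprod k r X (ttr k X)) (tprod k R U (ttr k U))"
    and "U' \<equiv> gd_step n r R k m As \<mu> X U"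
  assumes k: "0 < k" and r: "0 < r" and \<mu>: "0 < \<mu>"
    and \<sigma>: "0 < tsigma_min k n r X"
    and VX: "colsub n r k r X VX"
    and VXp: "teq n n k (tprod k (n - r) VXp (ttr k VXp)) (tsub tid (tprod k r VX (ttr k VX)))"
    and W: "tsvd_compact r R k r (tprod k n (ttr k VX) U) Vt St W"
    and Vuw: "colsub n r k s (tprod k R U W) Vuw"
    and h\<mu>: "\<mu> \<le> 1/100 * (tnorm k n r X) powr (-2) * (kappa k n r X) powr (-2)"
    and hU: "tnorm k n R U \<le> 3 * tnorm k n r X"
    and hV: "tnorm k (n - r) s (tprod k n (ttr k VXp) Vuw) \<le> 1/100 * (kappa k n r X) powr (-1)"
    and hE: "tnorm k n n (tsub (AstarA n k m As D) D) \<le> 1/100 * (tsigma_min k n r X)\<^sup>2"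
    and j: "j < k"
  shows "sigma_min (fslice k (tprod k R (tprod k n (ttr k VX) U') W) j) r r
           \<le> sigma_min (fslice k (tprod k n (ttr k VX) U') j) r R"
    and "sigma_min (fslice k (tprod k n (ttr k VX) U) j) r R *
           (1 + 1/4 * \<mu> * (tsigma_min k n r X)\<^sup>2 - \<mu> * (sigma_min (fslice k (tprod k n (ttr k VX) U) j) r R)\<^sup>2)
         \<le> sigma_min (fslice k (tprod k R (tprod k n (ttr k VX) U') W) j) r r"
proof -
  obtain B Mt where "gd_slice n r R (n - r) (fslice k VX j) (fslice k X j) B (fslice k VXp j)
    (fslice k U j) (fslice k W j) Mt (fslice k (tsub (AstarA n k m As D) D) j)
    (fslice k U' j) \<mu> (tnorm k n r X) (tsigma_min k n r X)
    (tsigma_min k n r X / tnorm k n r X / 100) (sigma_min (fslice k (tprod k n (ttr k VX) U) j) r R)"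
    using fslice_gd_slice[OF k r \<mu> \<sigma> VX VXp W Vuw h\<mu> hU hV hE[unfolded D_def] j] unfolding D_def U'_def .
  then interpret gd_slice n r R "n - r" "fslice k VX j" "fslice k X j" B "fslice k VXp j"
    "fslice k U j" "fslice k W j" Mt "fslice k (tsub (AstarA n k m As D) D) j"
    "fslice k U' j" \<mu> "tnorm k n r X" "tsigma_min k n r X"
    "tsigma_min k n r X / tnorm k n r X / 100" "sigma_min (fslice k (tprod k n (ttr k VX) U) j) r R" .
  have C: "fslice k (tprod k n (ttr k VX) U') j = mm n (adj (fslice k VX j)) (fslice k U' j)"
    using k by (simp add: fslice_simps)
  have CW: "fslice k (tprod k R (tprod k n (ttr k VX) U') W) j
      = mm R (fslice k (tprod k n (ttr k VX) U') j) (fslice k W j)"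
    using k by (simp add: fslice_simps)
  show "sigma_min (fslice k (tprod k R (tprod k n (ttr k VX) U') W) j) r r
      \<le> sigma_min (fslice k (tprod k n (ttr k VX) U') j) r R"
    unfolding CW sigma_min_def using isometry_dim_le[OF W_isometry]
    by (simp add: min_def sigma_mm_isometry_le[OF r_pos W_isometry])
  show "sigma_min (fslice k (tprod k n (ttr k VX) U) j) r R *
           (1 + 1/4 * \<mu> * (tsigma_min k n r X)\<^sup>2 - \<mu> * (sigma_min (fslice k (tprod k n (ttr k VX) U) j) r R)\<^sup>2)
         \<le> sigma_min (fslice k (tprod k R (tprod k n (ttr k VX) U') W) j) r r"
    unfolding sigma_min_def[of _ r r] min.idem
  proof (rule sigma_geI[OF r_pos isometry_idm])
    fix y assume "cvnorm r y = 1"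
    moreover have "mv r (fslice k W j) (mv r idm y) = mv r (fslice k W j) y"
      by (rule mv_cong) (rule mv_idm)
    hence "mv r (fslice k (tprod k R (tprod k n (ttr k VX) U') W) j) (mv r idm y)
        = mv n (adj (fslice k VX j)) (mv R (fslice k U' j) (mv r (fslice k W j) y))"
      unfolding CW C mv_mm by simp
    ultimately show "sigma_min (fslice k (tprod k n (ttr k VX) U) j) r R *
           (1 + 1/4 * \<mu> * (tsigma_min k n r X)\<^sup>2 - \<mu> * (sigma_min (fslice k (tprod k n (ttr k VX) U) j) r R)\<^sup>2)
         \<le> cvnorm r (mv r (fslice k (tprod k R (tprod k n (ttr k VX) U') W) j) (mv r idm y))"
      using cvnorm_step_ge by simp
  qed
qed

text \<open>The hypotheses that the measurement tensors are tubal-symmetric and that the singular tubes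
  of \<open>V\<^sub>X\<^sup>\<top> * U\<^sub>t\<close> are invertible are not needed: singular values are taken slice by slice through
  the max-min principle, which requires no invertibility, and \<open>\<A>\<^sup>*\<A>\<close> enters only through the
  norm bound on its restricted isometry error.\<close>
theorem lemma11:
  shows "\<exists>c::real>0. \<forall>(n::nat) (r::nat) (R::nat) (k::nat) (m::nat) (s::nat)
      (As::nat \<Rightarrow> tensor) (X::tensor) (U::tensor) (\<mu>::real)
      (VX::tensor) (VXp::tensor) (W::tensor) (Vuw::tensor).
    0 < k \<and> 0 < r \<and> 0 < \<mu> \<and>
    (\<forall>i<m. teq n n k (ttr k (As i)) (As i)) \<and>
    0 < tsigma_min k n r X \<and>
    colsub n r k r X VX \<and>
    teq n n k (tprod k (n - r) VXp (ttr k VXp)) (tsub tid (tprod k r VX (ttr k VX))) \<and>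
    (\<exists>Vt St. tsvd_compact r R k r (tprod k n (ttr k VX) U) Vt St W \<and>
             (\<forall>a<r. tube_inv k (St a a))) \<and>
    colsub n r k s (tprod k R U W) Vuw \<and>
    \<mu> \<le> c * (tnorm k n r X) powr (-2) * (kappa k n r X) powr (-2) \<and>
    tnorm k n R U \<le> 3 * tnorm k n r X \<and>
    tnorm k (n - r) s (tprod k n (ttr k VXp) Vuw) \<le> c * (kappa k n r X) powr (-1) \<and>
    tnorm k n n (tsub (AstarA n k m As (tsub (tprod k r X (ttr k X)) (tprod k R U (ttr k U))))
                       (tsub (tprod k r X (ttr k X)) (tprod k R U (ttr k U))))
      \<le> c * (tsigma_min k n r X)\<^sup>2
    \<longrightarrow>
    (\<forall>j<k.
       sigma_min (fslice k (tprod k n (ttr k VX) (gd_step n r R k m As \<mu> X U)) j) r R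
         \<ge> sigma_min (fslice k (tprod k R (tprod k n (ttr k VX) (gd_step n r R k m As \<mu> X U)) W) j) r r
     \<and> sigma_min (fslice k (tprod k R (tprod k n (ttr k VX) (gd_step n r R k m As \<mu> X U)) W) j) r r
         \<ge> sigma_min (fslice k (tprod k n (ttr k VX) U) j) r R *
           (1 + 1/4 * \<mu> * (tsigma_min k n r X)\<^sup>2
              - \<mu> * (sigma_min (fslice k (tprod k n (ttr k VX) U) j) r R)\<^sup>2))"
proof (intro exI[of _ "1/100"] conjI allI impI)
  show "(0::real) < 1/100" by simp
qed (elim conjE exE; rule fslice_sigma_min_growth; assumption)+

end
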